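(* Let $\mathcal V$ be a subcanonical descent category, $k$ a natural number, and $f:X\to Y$ a hypercover of $k$-groupoids. Then $X_n\to\mathrm{Map}(\partial\Delta^n\hookrightarrow\Delta^n,f)$ is an isomorphism for all $n\ge k$.
   Context: A descent category is a small category $\mathcal V$ with a subcategory of morphisms called covers such that: $\mathcal V$ has finite limits; pullbacks of covers are covers; if $f$ and $g\circ f$ are covers then $g$ is a cover. It is subcanonical if every cover is an effective epimorphism (i.e. $f:X\to Y$ is the coequalizer of $X\times_YX\rightrightarrows X$). A simplicial space is a simplicial object in $\mathcal V$; $\mathrm{Map}(T,X)$ is the finite limit representing simplicial maps $T\to X$; $\mathrm{Map}(S\hookrightarrow T,f)=\mathrm{Map}(S,X)\times_{\mathrm{Map}(S,Y)}\mathrm{Map}(T,Y)$. $\Lambda^n_i=\bigcup_{j\ne i}\partial_j\Delta^n$. A $k$-groupoid is a simplicial space with $X_n\to\mathrm{Map}(\Lambda^n_i,X)$ a cover for $n>0$, $0\le i\le n$, and an isomorphism for $n>k$. A hypercover is a morphism $f$ with $X_n\to\mathrm{Map}(\partial\Delta^n\hookrightarrow\Delta^n,f)$ a cover for all $n\ge0$. *)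

theory Defs
  imports Main
begin

record ('o,'m) cat =
  Ob  :: "'o set"
  Ar  :: "'m set"
  cdom :: "'m \<Rightarrow> 'o"
  ccod :: "'m \<Rightarrow> 'o"
  cmp :: "'m \<Rightarrow> 'm \<Rightarrow> 'm"   (* cmp g f = g o f *)
  idt :: "'o \<Rightarrow> 'm"

definition hom :: "('o,'m) cat \<Rightarrow> 'o \<Rightarrow> 'o \<Rightarrow> 'm set" where
  "hom C A B = {g \<in> Ar C. cdom C g = A \<and> ccod C g = B}"

definition is_cat :: "('o,'m) cat \<Rightarrow> bool" where
  "is_cat C \<longleftrightarrow>
     (\<forall>g\<in>Ar C. cdom C g \<in> Ob C \<and> ccod C g \<in> Ob C) \<and>
     (\<forall>A\<in>Ob C. idt C A \<in> hom C A A) \<and>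
     (\<forall>f g. f \<in> Ar C \<and> g \<in> Ar C \<and> ccod C f = cdom C g \<longrightarrow>
            cmp C g f \<in> hom C (cdom C f) (ccod C g)) \<and>
     (\<forall>f g h. f \<in> Ar C \<and> g \<in> Ar C \<and> h \<in> Ar C \<and> ccod C f = cdom C g \<and> ccod C g = cdom C h \<longrightarrow>
            cmp C h (cmp C g f) = cmp C (cmp C h g) f) \<and>
     (\<forall>f\<in>Ar C. cmp C f (idt C (cdom C f)) = f \<and> cmp C (idt C (ccod C f)) f = f)"

definition iso :: "('o,'m) cat \<Rightarrow> 'm \<Rightarrow> bool" where
  "iso C f \<longleftrightarrow> f \<in> Ar C \<and> (\<exists>g \<in> hom C (ccod C f) (cdom C f).
      cmp C g f = idt C (cdom C f) \<and> cmp C f g = idt C (ccod C f))"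

definition graph_cone ::
  "('o,'m) cat \<Rightarrow> nat set \<Rightarrow> nat set \<Rightarrow> (nat \<Rightarrow> nat) \<Rightarrow> (nat \<Rightarrow> nat) \<Rightarrow> (nat \<Rightarrow> 'o) \<Rightarrow> (nat \<Rightarrow> 'm)
     \<Rightarrow> 'o \<Rightarrow> (nat \<Rightarrow> 'm) \<Rightarrow> bool" where
  "graph_cone C V E src tgt Fo Fm L p \<longleftrightarrow> L \<in> Ob C \<and>
     (\<forall>v\<in>V. p v \<in> hom C L (Fo v)) \<and> (\<forall>e\<in>E. cmp C (Fm e) (p (src e)) = p (tgt e))"

definition has_finite_limits :: "('o,'m) cat \<Rightarrow> bool" where
  "has_finite_limits C \<longleftrightarrow>
    (\<forall>(V::nat set) (E::nat set) src tgt Fo Fm.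
       finite V \<and> finite E \<and> (\<forall>v\<in>V. Fo v \<in> Ob C) \<and>
       (\<forall>e\<in>E. src e \<in> V \<and> tgt e \<in> V \<and> Fm e \<in> hom C (Fo (src e)) (Fo (tgt e))) \<longrightarrow>
       (\<exists>L p. graph_cone C V E src tgt Fo Fm L p \<and>
          (\<forall>L' p'. graph_cone C V E src tgt Fo Fm L' p' \<longrightarrow>
              (\<exists>!u. u \<in> hom C L' L \<and> (\<forall>v\<in>V. cmp C (p v) u = p' v)))))"

definition is_pullback :: "('o,'m) cat \<Rightarrow> 'm \<Rightarrow> 'm \<Rightarrow> 'o \<Rightarrow> 'm \<Rightarrow> 'm \<Rightarrow> bool" where
  "is_pullback C r s P p1 p2 \<longleftrightarrow>
     r \<in> Ar C \<and> s \<in> Ar C \<and> ccod C r = ccod C s \<and> P \<in> Ob C \<and>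
     p1 \<in> hom C P (cdom C r) \<and> p2 \<in> hom C P (cdom C s) \<and> cmp C r p1 = cmp C s p2 \<and>
     (\<forall>Q q1 q2. Q \<in> Ob C \<and> q1 \<in> hom C Q (cdom C r) \<and> q2 \<in> hom C Q (cdom C s) \<and>
         cmp C r q1 = cmp C s q2 \<longrightarrow>
         (\<exists>!u. u \<in> hom C Q P \<and> cmp C p1 u = q1 \<and> cmp C p2 u = q2))"

definition effective_epi :: "('o,'m) cat \<Rightarrow> 'm \<Rightarrow> bool" where
  "effective_epi C f \<longleftrightarrow> f \<in> Ar C \<and>
     (\<forall>P p1 p2. is_pullback C f f P p1 p2 \<longrightarrow>
        (\<forall>Z h. Z \<in> Ob C \<and> h \<in> hom C (cdom C f) Z \<and> cmp C h p1 = cmp C h p2 \<longrightarrow>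
           (\<exists>!u. u \<in> hom C (ccod C f) Z \<and> cmp C u f = h)))"

definition descent_category :: "('o,'m) cat \<Rightarrow> 'm set \<Rightarrow> bool" where
  "descent_category C Cov \<longleftrightarrow> is_cat C \<and> has_finite_limits C \<and>
     \<comment> \<open>covers form a (wide) subcategory\<close>
     Cov \<subseteq> Ar C \<and> (\<forall>A\<in>Ob C. idt C A \<in> Cov) \<and>
     (\<forall>f g. f \<in> Cov \<and> g \<in> Cov \<and> ccod C f = cdom C g \<longrightarrow> cmp C g f \<in> Cov) \<and>
     \<comment> \<open>pullbacks of covers are covers\<close>
     (\<forall>f g P p1 p2. f \<in> Cov \<and> is_pullback C f g P p1 p2 \<longrightarrow> p2 \<in> Cov) \<and>
     \<comment> \<open>if f and g o f are covers then g is a cover\<close>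
     (\<forall>f g. f \<in> Cov \<and> g \<in> Ar C \<and> ccod C f = cdom C g \<and> cmp C g f \<in> Cov \<longrightarrow> g \<in> Cov)"

definition subcanonical :: "('o,'m) cat \<Rightarrow> 'm set \<Rightarrow> bool" where
  "subcanonical C Cov \<longleftrightarrow> (\<forall>f\<in>Cov. effective_epi C f)"

text \<open>A morphism [m] -> [n] of the simplex category is a monotone map {0..m} -> {0..n},
  represented by a function nat => nat which is normalised to 0 outside {0..m}.\<close>

definition dmap :: "nat \<Rightarrow> nat \<Rightarrow> (nat \<Rightarrow> nat) \<Rightarrow> bool" where
  "dmap m n \<theta> \<longleftrightarrow> (\<forall>i j. i \<le> j \<and> j \<le> m \<longrightarrow> \<theta> i \<le> \<theta> j) \<and> (\<forall>j\<le>m. \<theta> j \<le> n) \<and>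
                   (\<forall>j. m < j \<longrightarrow> \<theta> j = 0)"

definition dcomp :: "nat \<Rightarrow> (nat \<Rightarrow> nat) \<Rightarrow> (nat \<Rightarrow> nat) \<Rightarrow> (nat \<Rightarrow> nat)" where
  "dcomp m \<theta> \<phi> = (\<lambda>j. if j \<le> m then \<theta> (\<phi> j) else 0)"

definition did :: "nat \<Rightarrow> (nat \<Rightarrow> nat)" where
  "did m = (\<lambda>j. if j \<le> m then j else 0)"

record ('o,'m) sobj =
  sob :: "nat \<Rightarrow> 'o"
  smor :: "nat \<Rightarrow> nat \<Rightarrow> (nat \<Rightarrow> nat) \<Rightarrow> 'm"  (* smor X m n \<theta> : X_n -> X_m for \<theta> : [m] -> [n] *)

definition simplicial_object :: "('o,'m) cat \<Rightarrow> ('o,'m) sobj \<Rightarrow> bool" where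
  "simplicial_object C X \<longleftrightarrow>
     (\<forall>n. sob X n \<in> Ob C) \<and>
     (\<forall>m n \<theta>. dmap m n \<theta> \<longrightarrow> smor X m n \<theta> \<in> hom C (sob X n) (sob X m)) \<and>
     (\<forall>n. smor X n n (did n) = idt C (sob X n)) \<and>
     (\<forall>m k n \<phi> \<theta>. dmap m k \<phi> \<and> dmap k n \<theta> \<longrightarrow>
        smor X m n (dcomp m \<theta> \<phi>) = cmp C (smor X m k \<phi>) (smor X k n \<theta>))"

definition simplicial_map ::
  "('o,'m) cat \<Rightarrow> ('o,'m) sobj \<Rightarrow> ('o,'m) sobj \<Rightarrow> (nat \<Rightarrow> 'm) \<Rightarrow> bool" where
  "simplicial_map C X Y f \<longleftrightarrow> simplicial_object C X \<and> simplicial_object C Y \<and>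
     (\<forall>n. f n \<in> hom C (sob X n) (sob Y n)) \<and>
     (\<forall>m n \<theta>. dmap m n \<theta> \<longrightarrow> cmp C (smor Y m n \<theta>) (f n) = cmp C (f m) (smor X m n \<theta>))"

text \<open>A simplicial subset S of Delta^n is given by S m \<theta> (\<theta> an m-simplex of Delta^n).\<close>

definition Delta :: "nat \<Rightarrow> nat \<Rightarrow> (nat \<Rightarrow> nat) \<Rightarrow> bool" where
  "Delta n m \<theta> \<longleftrightarrow> dmap m n \<theta>"

text \<open>boundary = union of all faces \<partial>_j Delta^n\<close>
definition bdry :: "nat \<Rightarrow> nat \<Rightarrow> (nat \<Rightarrow> nat) \<Rightarrow> bool" where
  "bdry n m \<theta> \<longleftrightarrow> dmap m n \<theta> \<and> (\<exists>j\<le>n. j \<notin> \<theta> ` {0..m})"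

text \<open>horn = union of the faces \<partial>_j Delta^n for j \<noteq> i\<close>
definition horn :: "nat \<Rightarrow> nat \<Rightarrow> nat \<Rightarrow> (nat \<Rightarrow> nat) \<Rightarrow> bool" where
  "horn n i m \<theta> \<longleftrightarrow> dmap m n \<theta> \<and> (\<exists>j\<le>n. j \<noteq> i \<and> j \<notin> \<theta> ` {0..m})"

section \<open>Map(S, X) as the limit representing simplicial maps S -> X\<close>

text \<open>A cone with vertex U: a simplicial map S -> Hom(U, X_\<bullet>).\<close>
definition smap_cone ::
  "('o,'m) cat \<Rightarrow> ('o,'m) sobj \<Rightarrow> (nat \<Rightarrow> (nat \<Rightarrow> nat) \<Rightarrow> bool) \<Rightarrow> 'o \<Rightarrow> (nat \<Rightarrow> (nat \<Rightarrow> nat) \<Rightarrow> 'm) \<Rightarrow> bool" where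
  "smap_cone C X S U a \<longleftrightarrow> U \<in> Ob C \<and>
     (\<forall>m \<theta>. S m \<theta> \<longrightarrow> a m \<theta> \<in> hom C U (sob X m)) \<and>
     (\<forall>m k \<theta> \<phi>. S k \<theta> \<and> dmap m k \<phi> \<longrightarrow> cmp C (smor X m k \<phi>) (a k \<theta>) = a m (dcomp m \<theta> \<phi>))"

definition is_Map ::
  "('o,'m) cat \<Rightarrow> ('o,'m) sobj \<Rightarrow> (nat \<Rightarrow> (nat \<Rightarrow> nat) \<Rightarrow> bool) \<Rightarrow> 'o \<Rightarrow> (nat \<Rightarrow> (nat \<Rightarrow> nat) \<Rightarrow> 'm) \<Rightarrow> bool" where
  "is_Map C X S M \<pi> \<longleftrightarrow> smap_cone C X S M \<pi> \<and>
     (\<forall>U a. smap_cone C X S U a \<longrightarrow>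
        (\<exists>!u. u \<in> hom C U M \<and> (\<forall>m \<theta>. S m \<theta> \<longrightarrow> cmp C (\<pi> m \<theta>) u = a m \<theta>)))"

text \<open>P holds for the canonical morphism X_n -> Map(S, X) (for every choice of the limit).\<close>
definition canon_Map_prop ::
  "('o,'m) cat \<Rightarrow> ('o,'m) sobj \<Rightarrow> (nat \<Rightarrow> (nat \<Rightarrow> nat) \<Rightarrow> bool) \<Rightarrow> nat \<Rightarrow> ('m \<Rightarrow> bool) \<Rightarrow> bool" where
  "canon_Map_prop C X S n P \<longleftrightarrow>
     (\<forall>M \<pi> c. is_Map C X S M \<pi> \<and> c \<in> hom C (sob X n) M \<and>
        (\<forall>m \<theta>. S m \<theta> \<longrightarrow> cmp C (\<pi> m \<theta>) c = smor X m n \<theta>) \<longrightarrow> P c)"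

text \<open>P holds for the canonical morphism
  X_n -> Map(S \<hookrightarrow> Delta^n, f) = Map(S,X) \<times>_{Map(S,Y)} Map(Delta^n,Y)
  (for every choice of the limits and of the pullback).\<close>
definition canon_relMap_prop ::
  "('o,'m) cat \<Rightarrow> ('o,'m) sobj \<Rightarrow> ('o,'m) sobj \<Rightarrow> (nat \<Rightarrow> 'm) \<Rightarrow>
     (nat \<Rightarrow> (nat \<Rightarrow> nat) \<Rightarrow> bool) \<Rightarrow> nat \<Rightarrow> ('m \<Rightarrow> bool) \<Rightarrow> bool" where
  "canon_relMap_prop C X Y f S n P \<longleftrightarrow>
     (\<forall>MX \<pi>X MY \<pi>Y MT \<pi>T r s Pb p1 p2 cX cT c.
        is_Map C X S MX \<pi>X \<and> is_Map C Y S MY \<pi>Y \<and> is_Map C Y (Delta n) MT \<pi>T \<and>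
        r \<in> hom C MX MY \<and> (\<forall>m \<theta>. S m \<theta> \<longrightarrow> cmp C (\<pi>Y m \<theta>) r = cmp C (f m) (\<pi>X m \<theta>)) \<and>
        s \<in> hom C MT MY \<and> (\<forall>m \<theta>. S m \<theta> \<longrightarrow> cmp C (\<pi>Y m \<theta>) s = \<pi>T m \<theta>) \<and>
        is_pullback C r s Pb p1 p2 \<and>
        cX \<in> hom C (sob X n) MX \<and> (\<forall>m \<theta>. S m \<theta> \<longrightarrow> cmp C (\<pi>X m \<theta>) cX = smor X m n \<theta>) \<and>
        cT \<in> hom C (sob X n) MT \<and>
        (\<forall>m \<theta>. Delta n m \<theta> \<longrightarrow> cmp C (\<pi>T m \<theta>) cT = cmp C (f m) (smor X m n \<theta>)) \<and>
        c \<in> hom C (sob X n) Pb \<and> cmp C p1 c = cX \<and> cmp C p2 c = cT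
      \<longrightarrow> P c)"

definition k_groupoid :: "('o,'m) cat \<Rightarrow> 'm set \<Rightarrow> nat \<Rightarrow> ('o,'m) sobj \<Rightarrow> bool" where
  "k_groupoid C Cov k X \<longleftrightarrow> simplicial_object C X \<and>
     (\<forall>n i. 0 < n \<and> i \<le> n \<longrightarrow>
        canon_Map_prop C X (horn n i) n (\<lambda>c. c \<in> Cov) \<and>
        (k < n \<longrightarrow> canon_Map_prop C X (horn n i) n (iso C)))"

definition hypercover ::
  "('o,'m) cat \<Rightarrow> 'm set \<Rightarrow> ('o,'m) sobj \<Rightarrow> ('o,'m) sobj \<Rightarrow> (nat \<Rightarrow> 'm) \<Rightarrow> bool" where
  "hypercover C Cov X Y f \<longleftrightarrow> simplicial_map C X Y f \<and>
     (\<forall>n. canon_relMap_prop C X Y f (bdry n) n (\<lambda>c. c \<in> Cov))"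

end

theory Submission
  imports Defs
begin

text \<open>Write \<open>c : X\<^sub>n \<rightarrow> Map(\<partial>\<Delta>\<^sup>n \<hookrightarrow> \<Delta>\<^sup>n, f)\<close> for the canonical map into the pullback of
  \<open>Map(\<partial>\<Delta>\<^sup>n, X) \<rightarrow> Map(\<partial>\<Delta>\<^sup>n, Y) \<leftarrow> Y\<^sub>n\<close>. For \<open>n \<ge> k\<close> it is a monomorphism: above \<open>k\<close>
  because a simplex of the \<open>k\<close>-groupoid \<open>X\<close> is determined by a horn, and at \<open>n = k\<close> by degenerating
  to level \<open>k + 1\<close>, where the hypercover condition and horn uniqueness apply. At \<open>n = k\<close> the map
  \<open>c\<close> is moreover a cover, and a monic cover is an isomorphism because covers are effective
  epimorphisms; above \<open>k\<close> it has a section obtained by filling horns in \<open>X\<close>.\<close>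

section \<open>Simplicial operators\<close>

lemma dmap_dcomp: "dmap m k \<phi> \<Longrightarrow> dmap k n \<theta> \<Longrightarrow> dmap m n (dcomp m \<theta> \<phi>)"
  unfolding dmap_def dcomp_def by auto

lemma dcomp_assoc: "dmap m k \<psi> \<Longrightarrow> dcomp m (dcomp k \<theta> \<phi>) \<psi> = dcomp m \<theta> (dcomp m \<phi> \<psi>)"
  unfolding dmap_def dcomp_def by auto

lemma dcomp_did_left: "dmap m n \<theta> \<Longrightarrow> dcomp m (did n) \<theta> = \<theta>"
  unfolding dmap_def dcomp_def did_def by (rule ext) auto

lemma dcomp_did_right: "dmap m n \<theta> \<Longrightarrow> dcomp m \<theta> (did m) = \<theta>"
  unfolding dmap_def dcomp_def did_def by (rule ext) auto

lemma dmap_did: "dmap n n (did n)"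
  unfolding dmap_def did_def by auto

lemma image_dcomp: "dmap m k \<phi> \<Longrightarrow> dcomp m \<theta> \<phi> ` {0..m} = \<theta> ` \<phi> ` {0..m}"
  unfolding dmap_def dcomp_def by force

lemma image_dcomp_subset: "dmap m k \<phi> \<Longrightarrow> dcomp m \<theta> \<phi> ` {0..m} \<subseteq> \<theta> ` {0..k}"
  unfolding dmap_def dcomp_def by auto

lemma dmap_eqI: "dmap m n \<theta> \<Longrightarrow> dmap m n' \<theta>' \<Longrightarrow> (\<And>j. j \<le> m \<Longrightarrow> \<theta> j = \<theta>' j) \<Longrightarrow> \<theta> = \<theta>'"
  unfolding dmap_def by (rule ext) (metis not_le)

lemma dmap_le: "dmap m n \<theta> \<Longrightarrow> j \<le> m \<Longrightarrow> \<theta> j \<le> n"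
  unfolding dmap_def by blast

lemma dmap_mono: "dmap m n \<theta> \<Longrightarrow> i \<le> j \<Longrightarrow> j \<le> m \<Longrightarrow> \<theta> i \<le> \<theta> j"
  unfolding dmap_def by blast

lemma dmap_out: "dmap m n \<theta> \<Longrightarrow> m < j \<Longrightarrow> \<theta> j = 0"
  unfolding dmap_def by blast

lemma strict_mono_on_ge_self: "strict_mono_on {0..m} (\<iota>::nat \<Rightarrow> nat) \<Longrightarrow> i \<le> m \<Longrightarrow> i \<le> \<iota> i"
proof (induction i)
  case (Suc i)
  then have "\<iota> i < \<iota> (Suc i)" unfolding strict_mono_on_def by auto
  with Suc show ?case by auto
qed simp

lemma finite_set_strict_mono_enumeration:
  assumes "finite (A::nat set)" "A \<noteq> {}"
  obtains m \<iota> where "strict_mono_on {0..m::nat} \<iota>" "\<iota> ` {0..m} = A"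
proof -
  define L where "L = sorted_list_of_set A"
  have sorted: "sorted_wrt (<) L" and set_L: "set L = A" and len: "0 < length L"
    using assms unfolding L_def by (simp_all add: card_gt_0_iff)
  have interval: "{0..length L - 1} = {..<length L}" using len by (auto simp: less_eq_Suc_le)
  have "strict_mono_on {0..length L - 1} (\<lambda>i. L ! i)"
    using sorted unfolding interval strict_mono_on_def by (simp add: sorted_wrt_iff_nth_less)
  moreover have "(\<lambda>i. L ! i) ` {0..length L - 1} = A"
    using set_L unfolding interval by (auto simp: in_set_conv_nth)
  ultimately show ?thesis by (rule that)
qed

lemma strict_mono_on_image_eq:
  assumes \<iota>1: "strict_mono_on {0..m1} (\<iota>1::nat \<Rightarrow> nat)" and \<iota>2: "strict_mono_on {0..m2} (\<iota>2::nat \<Rightarrow> nat)"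
    and image_eq: "\<iota>1 ` {0..m1} = \<iota>2 ` {0..m2}"
  shows "m1 = m2" and "j \<le> m1 \<Longrightarrow> \<iota>1 j = \<iota>2 j"
proof -
  show m: "m1 = m2"
    using card_image[OF strict_mono_on_imp_inj_on[OF \<iota>1]] card_image[OF strict_mono_on_imp_inj_on[OF \<iota>2]] image_eq
    by simp
  have sorted: "sorted_wrt (<) (map \<iota> [0..<Suc m])" if "strict_mono_on {0..m} \<iota>" for m and \<iota> :: "nat \<Rightarrow> nat"
    using that unfolding sorted_wrt_map strict_mono_on_def by (intro sorted_wrt_mono_rel[OF _ sorted_wrt_upt]) auto
  have lists: "map \<iota>1 [0..<Suc m1] = map \<iota>2 [0..<Suc m1]"
  proof (rule strict_sorted_equal)
    show "sorted_wrt (<) (map \<iota>1 [0..<Suc m1])" "sorted_wrt (<) (map \<iota>2 [0..<Suc m1])"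
      using sorted[OF \<iota>1] sorted[OF \<iota>2] m by simp_all
    show "set (map \<iota>1 [0..<Suc m1]) = set (map \<iota>2 [0..<Suc m1])"
      using image_eq m by (simp only: set_map set_upt atLeastLessThanSuc_atLeastAtMost)
  qed
  show "\<iota>1 j = \<iota>2 j" if "j \<le> m1"
    using lists that by (simp del: upt_Suc add: map_eq_conv)
qed

definition epi_mono_factorization ::
  "nat \<Rightarrow> nat \<Rightarrow> (nat \<Rightarrow> nat) \<Rightarrow> nat \<Rightarrow> (nat \<Rightarrow> nat) \<Rightarrow> (nat \<Rightarrow> nat) \<Rightarrow> bool" where
  "epi_mono_factorization m n \<theta> m' \<iota> \<pi> \<longleftrightarrow>
     dmap m' n \<iota> \<and> strict_mono_on {0..m'} \<iota> \<and> dmap m m' \<pi> \<and> \<pi> ` {0..m} = {0..m'} \<and>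
     dcomp m \<iota> \<pi> = \<theta>"

lemma dmap_strict_mono_on:
  assumes \<iota>: "strict_mono_on {0..m} \<iota>" and le: "\<And>i. i \<le> m \<Longrightarrow> \<iota> i \<le> n"
  shows "dmap m n (\<lambda>i. if i \<le> m then \<iota> i else 0)"
  unfolding dmap_def
proof (intro conjI allI impI)
  fix i j assume ij: "i \<le> j \<and> j \<le> m"
  show "(if i \<le> m then \<iota> i else 0) \<le> (if j \<le> m then \<iota> j else 0)"
  proof (cases "i = j")
    case False
    then have "\<iota> i < \<iota> j" using ij by (intro strict_mono_onD[OF \<iota>]) auto
    with ij show ?thesis by auto
  qed simp
qed (simp_all add: le)

lemma strict_mono_enumeration_factor:
  assumes \<theta>: "dmap m n \<theta>" and \<iota>: "strict_mono_on {0..m'} (\<iota>::nat \<Rightarrow> nat)"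
    and image: "\<iota> ` {0..m'} = \<theta> ` {0..m}"
  obtains \<pi> where "dmap m m' \<pi>" "\<pi> ` {0..m} = {0..m'}" "\<And>j. j \<le> m \<Longrightarrow> \<iota> (\<pi> j) = \<theta> j"
proof -
  have inj: "a = b" if "a \<le> m'" "b \<le> m'" "\<iota> a = \<iota> b" for a b
    using strict_mono_on_imp_inj_on[OF \<iota>] that by (simp add: inj_on_def)
  define \<pi> where "\<pi> = (\<lambda>j. if j \<le> m then (THE i. i \<le> m' \<and> \<iota> i = \<theta> j) else 0)"
  have \<pi>: "\<pi> j \<le> m' \<and> \<iota> (\<pi> j) = \<theta> j" if "j \<le> m" for j
  proof -
    have "\<theta> j \<in> \<iota> ` {0..m'}" using image that by auto
    then obtain i where "i \<le> m'" "\<iota> i = \<theta> j" by auto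
    then have "\<exists>!i. i \<le> m' \<and> \<iota> i = \<theta> j" using inj by (intro ex1I[of _ i]) auto
    from theI'[OF this] that show ?thesis unfolding \<pi>_def by simp
  qed
  have "dmap m m' \<pi>"
    unfolding dmap_def
  proof (intro conjI allI impI)
    fix i j assume ij: "i \<le> j \<and> j \<le> m"
    show "\<pi> i \<le> \<pi> j"
    proof (rule ccontr)
      assume "\<not> \<pi> i \<le> \<pi> j"
      then have "\<iota> (\<pi> j) < \<iota> (\<pi> i)" using \<pi> ij by (intro strict_mono_onD[OF \<iota>]) auto
      then have "\<theta> j < \<theta> i" using \<pi> ij by auto
      then show False using dmap_mono[OF \<theta>] ij by (meson not_le)
    qed
  qed (use \<pi> in \<open>auto simp: \<pi>_def\<close>)
  moreover have "\<pi> ` {0..m} = {0..m'}"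
  proof
    show "\<pi> ` {0..m} \<subseteq> {0..m'}" using \<pi> by auto
    show "{0..m'} \<subseteq> \<pi> ` {0..m}"
    proof
      fix i assume i: "i \<in> {0..m'}"
      then have "\<iota> i \<in> \<theta> ` {0..m}" using image by blast
      then obtain j where j: "j \<le> m" "\<theta> j = \<iota> i" by (metis atLeastAtMost_iff imageE)
      then have "\<pi> j = i" using \<pi>[OF j(1)] i inj by auto
      with j(1) show "i \<in> \<pi> ` {0..m}" by auto
    qed
  qed
  ultimately show ?thesis using \<pi> by (intro that) auto
qed

lemma epi_mono_factorization_exists:
  assumes \<theta>: "dmap m n \<theta>"
  obtains m' \<iota> \<pi> where "epi_mono_factorization m n \<theta> m' \<iota> \<pi>"
proof -
  have "finite (\<theta> ` {0..m})" "\<theta> ` {0..m} \<noteq> {}" by auto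
  then obtain m' \<iota> where \<iota>: "strict_mono_on {0..m'::nat} \<iota>" and image: "\<iota> ` {0..m'} = \<theta> ` {0..m}"
    by (rule finite_set_strict_mono_enumeration)
  obtain \<pi> where \<pi>: "dmap m m' \<pi>" "\<pi> ` {0..m} = {0..m'}" "\<And>j. j \<le> m \<Longrightarrow> \<iota> (\<pi> j) = \<theta> j"
    by (rule strict_mono_enumeration_factor[OF \<theta> \<iota> image]) auto
  have "\<iota> i \<le> n" if "i \<le> m'" for i
  proof -
    have "\<iota> i \<in> \<theta> ` {0..m}" using image that by auto
    then show ?thesis using dmap_le[OF \<theta>] by auto
  qed
  then have "dmap m' n (\<lambda>i. if i \<le> m' then \<iota> i else 0)" by (rule dmap_strict_mono_on[OF \<iota>])
  moreover have "strict_mono_on {0..m'} (\<lambda>i. if i \<le> m' then \<iota> i else 0)"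
    using \<iota> unfolding strict_mono_on_def by auto
  moreover have "dcomp m (\<lambda>i. if i \<le> m' then \<iota> i else 0) \<pi> = \<theta>"
  proof
    fix j show "dcomp m (\<lambda>i. if i \<le> m' then \<iota> i else 0) \<pi> j = \<theta> j"
      using \<pi>(3)[of j] dmap_le[OF \<pi>(1), of j] dmap_out[OF \<theta>, of j] unfolding dcomp_def by auto
  qed
  ultimately show ?thesis using \<pi>(1,2) by (intro that) (unfold epi_mono_factorization_def, intro conjI)
qed

lemma epi_mono_factorization_dim: "epi_mono_factorization m n \<theta> m' \<iota> \<pi> \<Longrightarrow> m' \<le> n"
  using strict_mono_on_ge_self[of m' \<iota> m'] unfolding epi_mono_factorization_def dmap_def by force

lemma epi_mono_factorization_unique:
  assumes f1: "epi_mono_factorization m n \<theta> m1 \<iota>1 \<pi>1"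
    and f2: "epi_mono_factorization m n \<theta> m2 \<iota>2 \<pi>2"
  shows "m1 = m2 \<and> \<iota>1 = \<iota>2 \<and> \<pi>1 = \<pi>2"
proof -
  have \<iota>1: "dmap m1 n \<iota>1" "strict_mono_on {0..m1} \<iota>1"
    and \<pi>1: "dmap m m1 \<pi>1" "\<pi>1 ` {0..m} = {0..m1}" and \<theta>1: "dcomp m \<iota>1 \<pi>1 = \<theta>"
    using f1 unfolding epi_mono_factorization_def by blast+
  have \<iota>2: "dmap m2 n \<iota>2" "strict_mono_on {0..m2} \<iota>2"
    and \<pi>2: "dmap m m2 \<pi>2" "\<pi>2 ` {0..m} = {0..m2}" and \<theta>2: "dcomp m \<iota>2 \<pi>2 = \<theta>"
    using f2 unfolding epi_mono_factorization_def by blast+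
  have image_eq: "\<iota>1 ` {0..m1} = \<iota>2 ` {0..m2}"
    using image_dcomp[OF \<pi>1(1), of \<iota>1] image_dcomp[OF \<pi>2(1), of \<iota>2] \<pi>1(2) \<pi>2(2) \<theta>1 \<theta>2 by simp
  note m = strict_mono_on_image_eq(1)[OF \<iota>1(2) \<iota>2(2) image_eq]
  have \<iota>: "\<iota>1 = \<iota>2"
  proof (rule dmap_eqI[OF \<iota>1(1)])
    show "dmap m1 n \<iota>2" using \<iota>2(1) m by simp
  qed (rule strict_mono_on_image_eq(2)[OF \<iota>1(2) \<iota>2(2) image_eq])
  have "\<pi>1 = \<pi>2"
  proof (rule dmap_eqI[OF \<pi>1(1)])
    show "dmap m m1 \<pi>2" using \<pi>2(1) m by simp
    fix j assume j: "j \<le> m"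
    have "\<iota>1 (\<pi>1 j) = \<iota>1 (\<pi>2 j)"
      using fun_cong[OF trans[OF \<theta>1 \<theta>2[symmetric]], of j] j \<iota> unfolding dcomp_def by simp
    moreover have "\<pi>1 j \<in> {0..m1}" "\<pi>2 j \<in> {0..m1}"
      using dmap_le[OF \<pi>1(1) j] dmap_le[OF \<pi>2(1) j] m by auto
    ultimately show "\<pi>1 j = \<pi>2 j" using strict_mono_on_imp_inj_on[OF \<iota>1(2)] by (simp add: inj_on_eq_iff)
  qed
  with m \<iota> show ?thesis by blast
qed

definition dsigma_top :: "nat \<Rightarrow> nat \<Rightarrow> nat" where
  "dsigma_top p = (\<lambda>i. if i \<le> p then i else if i = Suc p then p else 0)"

definition ddelta_bot :: "nat \<Rightarrow> nat \<Rightarrow> nat" where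
  "ddelta_bot p = (\<lambda>i. if i \<le> p then Suc i else 0)"

lemma dmap_dsigma_top: "dmap (Suc p) p (dsigma_top p)"
  unfolding dmap_def dsigma_top_def by auto

text \<open>Read as a map \<open>[p] \<rightarrow> [p + 1]\<close>, \<open>did p\<close> is the coface that omits \<open>p + 1\<close>.\<close>

lemma dmap_did_Suc: "dmap p (Suc p) (did p)"
  unfolding dmap_def did_def by auto

lemma dmap_ddelta_bot: "dmap p (Suc p) (ddelta_bot p)"
  unfolding dmap_def ddelta_bot_def by auto

lemma dmap_avoiding_top:
  assumes \<psi>: "dmap m (Suc p) \<psi>" and top: "Suc p \<notin> \<psi> ` {0..m}"
  shows "dmap m p \<psi>" and "dcomp m (dsigma_top p) \<psi> = \<psi>"
proof -
  have le: "\<psi> j \<le> p" if "j \<le> m" for j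
    using dmap_le[OF \<psi> that] top that by (metis atLeastAtMost_iff image_eqI le0 le_Suc_eq)
  then show "dmap m p \<psi>" using \<psi> unfolding dmap_def by blast
  show "dcomp m (dsigma_top p) \<psi> = \<psi>"
  proof
    fix j show "dcomp m (dsigma_top p) \<psi> j = \<psi> j"
      using le[of j] dmap_out[OF \<psi>, of j] unfolding dcomp_def dsigma_top_def by auto
  qed
qed

lemma dmap_avoiding_bot:
  assumes \<theta>: "dmap m (Suc p) \<theta>" and bot: "0 \<notin> \<theta> ` {0..m}"
  shows "dmap m p (\<lambda>j. \<theta> j - 1)" and "dcomp m (ddelta_bot p) (\<lambda>j. \<theta> j - 1) = \<theta>"
proof -
  have pos: "\<theta> j \<noteq> 0" if "j \<le> m" for j using bot that by auto
  show "dmap m p (\<lambda>j. \<theta> j - 1)"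
    unfolding dmap_def
  proof (intro conjI allI impI)
    fix i j assume "i \<le> j \<and> j \<le> m"
    then show "\<theta> i - 1 \<le> \<theta> j - 1" using dmap_mono[OF \<theta>] by (simp add: diff_le_mono)
  next
    fix j assume "j \<le> m"
    then show "\<theta> j - 1 \<le> p" using dmap_le[OF \<theta>] by (simp add: le_diff_conv)
  qed (simp add: dmap_out[OF \<theta>])
  show "dcomp m (ddelta_bot p) (\<lambda>j. \<theta> j - 1) = \<theta>"
  proof
    fix j show "dcomp m (ddelta_bot p) (\<lambda>j. \<theta> j - 1) j = \<theta> j"
      using pos[of j] dmap_le[OF \<theta>, of j] dmap_out[OF \<theta>, of j]
      unfolding dcomp_def ddelta_bot_def by auto
  qed
qed

definition simplicial_subset :: "nat \<Rightarrow> (nat \<Rightarrow> (nat \<Rightarrow> nat) \<Rightarrow> bool) \<Rightarrow> bool" where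
  "simplicial_subset n S \<longleftrightarrow> (\<exists>P. (\<forall>A B. P A \<longrightarrow> B \<subseteq> A \<longrightarrow> P B) \<and>
      (\<forall>m \<theta>. S m \<theta> \<longleftrightarrow> dmap m n \<theta> \<and> P (\<theta> ` {0..m})))"

lemma simplicial_subset_dmap: "simplicial_subset n S \<Longrightarrow> S m \<theta> \<Longrightarrow> dmap m n \<theta>"
  unfolding simplicial_subset_def by blast

lemma simplicial_subset_image_subset:
  assumes "simplicial_subset n S" "S m \<theta>" "dmap m' n \<iota>" "\<iota> ` {0..m'} \<subseteq> \<theta> ` {0..m}"
  shows "S m' \<iota>"
proof -
  obtain P where P: "\<And>A B. P A \<Longrightarrow> B \<subseteq> A \<Longrightarrow> P B" "\<And>m \<theta>. S m \<theta> \<longleftrightarrow> dmap m n \<theta> \<and> P (\<theta> ` {0..m})"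
    using assms(1) unfolding simplicial_subset_def by blast
  have "P (\<theta> ` {0..m})" using P(2)[of m \<theta>] assms(2) by blast
  then have "P (\<iota> ` {0..m'})" using assms(4) by (rule P(1))
  then show ?thesis using P(2)[of m' \<iota>] assms(3) by blast
qed

lemma simplicial_subset_dcomp:
  assumes S: "simplicial_subset n S" and \<theta>: "S k \<theta>" and \<phi>: "dmap m k \<phi>"
  shows "S m (dcomp m \<theta> \<phi>)"
proof -
  have "dmap m n (dcomp m \<theta> \<phi>)" using \<phi> simplicial_subset_dmap[OF S, OF \<theta>] by (rule dmap_dcomp)
  moreover have "dcomp m \<theta> \<phi> ` {0..m} \<subseteq> \<theta> ` {0..k}" using \<phi> by (rule image_dcomp_subset)
  ultimately show ?thesis by (rule simplicial_subset_image_subset[OF S, OF \<theta>])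
qed

lemma simplicial_subset_Delta: "simplicial_subset n (Delta n)"
  unfolding simplicial_subset_def Delta_def by (rule exI[of _ "\<lambda>A. True"]) simp

lemma simplicial_subset_bdry: "simplicial_subset n (bdry n)"
  unfolding simplicial_subset_def bdry_def by (rule exI[of _ "\<lambda>A. \<exists>j\<le>n. j \<notin> A"]) blast

lemma simplicial_subset_horn: "simplicial_subset n (horn n i)"
  unfolding simplicial_subset_def horn_def by (rule exI[of _ "\<lambda>A. \<exists>j\<le>n. j \<noteq> i \<and> j \<notin> A"]) blast

lemma horn_imp_bdry: "horn n i m \<theta> \<Longrightarrow> bdry n m \<theta>"
  unfolding horn_def bdry_def by blast

lemma bdry_not_horn_bot: "bdry n m \<theta> \<Longrightarrow> \<not> horn n 0 m \<theta> \<Longrightarrow> 0 \<notin> \<theta> ` {0..m}"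
  unfolding bdry_def horn_def by metis

lemma bdry_did_Suc: "bdry (Suc p) p (did p)"
  unfolding bdry_def using dmap_did_Suc by (auto simp: did_def)

lemma bdry_ddelta_bot: "bdry (Suc p) p (ddelta_bot p)"
  unfolding bdry_def using dmap_ddelta_bot by (auto simp: ddelta_bot_def)

lemma horn_bot_dcomp_ddelta_bot:
  assumes "bdry p m \<psi>"
  shows "horn (Suc p) 0 m (dcomp m (ddelta_bot p) \<psi>)"
proof -
  obtain j where j: "j \<le> p" "j \<notin> \<psi> ` {0..m}" and \<psi>: "dmap m p \<psi>"
    using assms unfolding bdry_def by blast
  have "Suc j \<notin> dcomp m (ddelta_bot p) \<psi> ` {0..m}"
    using j(2) dmap_le[OF \<psi>] unfolding dcomp_def ddelta_bot_def by auto
  then show ?thesis unfolding horn_def using dmap_dcomp[OF \<psi> dmap_ddelta_bot] j(1) by auto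
qed

lemma ex1_equality: "\<exists>!x. P x \<Longrightarrow> P a \<Longrightarrow> P b \<Longrightarrow> a = b"
  by blast

lemma ex1_conj_cong: "(\<And>x. A x \<Longrightarrow> P x \<longleftrightarrow> Q x) \<Longrightarrow> (\<exists>!x. A x \<and> P x) \<longleftrightarrow> (\<exists>!x. A x \<and> Q x)"
  by (metis (mono_tags))

lemma simplicial_object_sob: "simplicial_object C X \<Longrightarrow> sob X n \<in> Ob C"
  unfolding simplicial_object_def by blast

lemma simplicial_object_smor_hom:
  "simplicial_object C X \<Longrightarrow> dmap m n \<theta> \<Longrightarrow> smor X m n \<theta> \<in> hom C (sob X n) (sob X m)"
  unfolding simplicial_object_def by blast

lemma simplicial_object_smor_dcomp:
  "simplicial_object C X \<Longrightarrow> dmap m k \<phi> \<Longrightarrow> dmap k n \<theta> \<Longrightarrow>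
   smor X m n (dcomp m \<theta> \<phi>) = cmp C (smor X m k \<phi>) (smor X k n \<theta>)"
  unfolding simplicial_object_def by blast

lemma simplicial_object_smor_did: "simplicial_object C X \<Longrightarrow> smor X n n (did n) = idt C (sob X n)"
  unfolding simplicial_object_def by blast

lemma simplicial_map_hom: "simplicial_map C X Y f \<Longrightarrow> f n \<in> hom C (sob X n) (sob Y n)"
  unfolding simplicial_map_def by blast

lemma simplicial_map_natural:
  "simplicial_map C X Y f \<Longrightarrow> dmap m n \<theta> \<Longrightarrow> cmp C (smor Y m n \<theta>) (f n) = cmp C (f m) (smor X m n \<theta>)"
  unfolding simplicial_map_def by blast

lemma smap_coneI:
  "U \<in> Ob C \<Longrightarrow> (\<And>m \<theta>. S m \<theta> \<Longrightarrow> a m \<theta> \<in> hom C U (sob X m)) \<Longrightarrow>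
   (\<And>m k \<theta> \<phi>. S k \<theta> \<Longrightarrow> dmap m k \<phi> \<Longrightarrow> cmp C (smor X m k \<phi>) (a k \<theta>) = a m (dcomp m \<theta> \<phi>)) \<Longrightarrow>
   smap_cone C X S U a"
  unfolding smap_cone_def by blast

lemma smap_cone_vertex: "smap_cone C X S U a \<Longrightarrow> U \<in> Ob C"
  unfolding smap_cone_def by blast

lemma smap_cone_hom: "smap_cone C X S U a \<Longrightarrow> S m \<theta> \<Longrightarrow> a m \<theta> \<in> hom C U (sob X m)"
  unfolding smap_cone_def by blast

lemma smap_cone_compat:
  "smap_cone C X S U a \<Longrightarrow> S k \<theta> \<Longrightarrow> dmap m k \<phi> \<Longrightarrow> cmp C (smor X m k \<phi>) (a k \<theta>) = a m (dcomp m \<theta> \<phi>)"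
  unfolding smap_cone_def by blast

lemma smap_cone_restrict: "smap_cone C X S U a \<Longrightarrow> (\<And>m \<theta>. S' m \<theta> \<Longrightarrow> S m \<theta>) \<Longrightarrow> smap_cone C X S' U a"
  unfolding smap_cone_def by blast

lemma is_Map_cone: "is_Map C X S M \<pi> \<Longrightarrow> smap_cone C X S M \<pi>"
  unfolding is_Map_def by blast

lemma is_Map_proj_hom: "is_Map C X S M \<pi> \<Longrightarrow> S m \<theta> \<Longrightarrow> \<pi> m \<theta> \<in> hom C M (sob X m)"
  unfolding is_Map_def smap_cone_def by blast

lemma is_Map_universal:
  "is_Map C X S M \<pi> \<Longrightarrow> smap_cone C X S U a \<Longrightarrow>
   \<exists>!u. u \<in> hom C U M \<and> (\<forall>m \<theta>. S m \<theta> \<longrightarrow> cmp C (\<pi> m \<theta>) u = a m \<theta>)"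
  unfolding is_Map_def by blast

lemma is_Map_lift:
  assumes "is_Map C X S M \<pi>" "smap_cone C X S U a"
  obtains u where "u \<in> hom C U M" "\<And>m \<theta>. S m \<theta> \<Longrightarrow> cmp C (\<pi> m \<theta>) u = a m \<theta>"
  using is_Map_universal[OF assms] by blast

locale category =
  fixes C :: "('o, 'm) cat"
  assumes is_cat: "is_cat C"
begin

abbreviation arr_comp (infixl "\<cdot>" 70) where "g \<cdot> f \<equiv> cmp C g f"

lemma hom_objs: "f \<in> hom C A B \<Longrightarrow> A \<in> Ob C \<and> B \<in> Ob C"
  using is_cat unfolding is_cat_def hom_def by auto

lemma comp_hom: "f \<in> hom C A B \<Longrightarrow> g \<in> hom C B D \<Longrightarrow> g \<cdot> f \<in> hom C A D"
  using is_cat unfolding is_cat_def hom_def by auto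

lemma comp_assoc: "f \<in> hom C A B \<Longrightarrow> g \<in> hom C B D \<Longrightarrow> h \<in> hom C D E \<Longrightarrow> h \<cdot> (g \<cdot> f) = (h \<cdot> g) \<cdot> f"
  using is_cat unfolding is_cat_def hom_def by auto

lemma idt_hom: "A \<in> Ob C \<Longrightarrow> idt C A \<in> hom C A A"
  using is_cat unfolding is_cat_def by auto

lemma comp_idt_left: "f \<in> hom C A B \<Longrightarrow> idt C B \<cdot> f = f"
  using is_cat unfolding is_cat_def hom_def by auto

lemma comp_idt_right: "f \<in> hom C A B \<Longrightarrow> f \<cdot> idt C A = f"
  using is_cat unfolding is_cat_def hom_def by auto

lemma isoI: "c \<in> hom C A B \<Longrightarrow> g \<in> hom C B A \<Longrightarrow> g \<cdot> c = idt C A \<Longrightarrow> c \<cdot> g = idt C B \<Longrightarrow> iso C c"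
  unfolding iso_def hom_def by auto

lemma iso_inverse:
  assumes "iso C c" "c \<in> hom C A B"
  obtains g where "g \<in> hom C B A" "g \<cdot> c = idt C A" "c \<cdot> g = idt C B"
  using assms unfolding iso_def hom_def by auto

lemma iso_cancel_left:
  assumes c: "iso C c" "c \<in> hom C A B" and z: "z \<in> hom C U A" "z' \<in> hom C U A" and eq: "c \<cdot> z = c \<cdot> z'"
  shows "z = z'"
proof -
  obtain g where g: "g \<in> hom C B A" "g \<cdot> c = idt C A" using iso_inverse[OF c] .
  have "z = (g \<cdot> c) \<cdot> z" using g(2) comp_idt_left[OF z(1)] by simp
  also have "\<dots> = g \<cdot> (c \<cdot> z')" using comp_assoc[OF z(1) c(2) g(1)] eq by simp
  also have "\<dots> = (g \<cdot> c) \<cdot> z'" using comp_assoc[OF z(2) c(2) g(1)] by simp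
  also have "\<dots> = z'" using g(2) comp_idt_left[OF z(2)] by simp
  finally show ?thesis .
qed

lemma smor_comp_point:
  assumes X: "simplicial_object C X" and \<phi>: "dmap m k \<phi>" and \<theta>: "dmap k n \<theta>" and z: "z \<in> hom C U (sob X n)"
  shows "smor X m k \<phi> \<cdot> (smor X k n \<theta> \<cdot> z) = smor X m n (dcomp m \<theta> \<phi>) \<cdot> z"
  using comp_assoc[OF z simplicial_object_smor_hom[OF X \<theta>] simplicial_object_smor_hom[OF X \<phi>]]
    simplicial_object_smor_dcomp[OF X \<phi> \<theta>] by simp

lemma smor_did_point: "simplicial_object C X \<Longrightarrow> z \<in> hom C U (sob X n) \<Longrightarrow> smor X n n (did n) \<cdot> z = z"
  by (simp add: simplicial_object_smor_did comp_idt_left)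

lemma smor_point_hom:
  "simplicial_object C X \<Longrightarrow> z \<in> hom C U (sob X n) \<Longrightarrow> dmap m n \<theta> \<Longrightarrow> smor X m n \<theta> \<cdot> z \<in> hom C U (sob X m)"
  using comp_hom simplicial_object_smor_hom by blast

lemma simplicial_map_natural_point:
  assumes f: "simplicial_map C X Y f" and z: "z \<in> hom C U (sob X n)" and \<theta>: "dmap m n \<theta>"
  shows "f m \<cdot> (smor X m n \<theta> \<cdot> z) = smor Y m n \<theta> \<cdot> (f n \<cdot> z)"
proof -
  have X: "simplicial_object C X" and Y: "simplicial_object C Y"
    using f unfolding simplicial_map_def by blast+
  show ?thesis
    using comp_assoc[OF z simplicial_object_smor_hom[OF X \<theta>] simplicial_map_hom[OF f]]
      comp_assoc[OF z simplicial_map_hom[OF f] simplicial_object_smor_hom[OF Y \<theta>]]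
      simplicial_map_natural[OF f \<theta>] by simp
qed

lemma smor_cone:
  assumes X: "simplicial_object C X" and S: "simplicial_subset n S"
  shows "smap_cone C X S (sob X n) (\<lambda>m \<theta>. smor X m n \<theta>)"
proof (rule smap_coneI)
  show "sob X n \<in> Ob C" using X by (rule simplicial_object_sob)
  fix m \<theta> assume "S m \<theta>"
  then show "smor X m n \<theta> \<in> hom C (sob X n) (sob X m)"
    by (intro simplicial_object_smor_hom[OF X] simplicial_subset_dmap[OF S])
next
  fix m k \<theta> \<phi> assume \<theta>: "S k \<theta>" and \<phi>: "dmap m k \<phi>"
  show "smor X m k \<phi> \<cdot> smor X k n \<theta> = smor X m n (dcomp m \<theta> \<phi>)"
    using simplicial_object_smor_dcomp[OF X \<phi> simplicial_subset_dmap[OF S, OF \<theta>]] by (rule sym)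
qed

lemma smap_cone_comp:
  assumes X: "simplicial_object C X" and a: "smap_cone C X S U a" and g: "g \<in> hom C V U"
  shows "smap_cone C X S V (\<lambda>m \<theta>. a m \<theta> \<cdot> g)"
proof (rule smap_coneI)
  show "V \<in> Ob C" using hom_objs[OF g] by blast
  fix m \<theta> assume "S m \<theta>"
  then show "a m \<theta> \<cdot> g \<in> hom C V (sob X m)" by (intro comp_hom[OF g] smap_cone_hom[OF a])
next
  fix m k \<theta> \<phi> assume \<theta>: "S k \<theta>" and \<phi>: "dmap m k \<phi>"
  have "smor X m k \<phi> \<cdot> (a k \<theta> \<cdot> g) = (smor X m k \<phi> \<cdot> a k \<theta>) \<cdot> g"
    using comp_assoc[OF g smap_cone_hom[OF a, OF \<theta>] simplicial_object_smor_hom[OF X \<phi>]] .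
  then show "smor X m k \<phi> \<cdot> (a k \<theta> \<cdot> g) = a m (dcomp m \<theta> \<phi>) \<cdot> g"
    using smap_cone_compat[OF a, OF \<theta> \<phi>] by simp
qed

lemma smor_point_cone:
  "simplicial_object C X \<Longrightarrow> simplicial_subset n S \<Longrightarrow> z \<in> hom C U (sob X n) \<Longrightarrow>
   smap_cone C X S U (\<lambda>m \<theta>. smor X m n \<theta> \<cdot> z)"
  by (rule smap_cone_comp[OF _ smor_cone])

lemma smap_cone_map:
  assumes f: "simplicial_map C X Y f" and a: "smap_cone C X S U a"
  shows "smap_cone C Y S U (\<lambda>m \<theta>. f m \<cdot> a m \<theta>)"
proof (rule smap_coneI)
  show "U \<in> Ob C" using a by (rule smap_cone_vertex)
  fix m \<theta> assume "S m \<theta>"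
  then show "f m \<cdot> a m \<theta> \<in> hom C U (sob Y m)"
    by (intro comp_hom[OF _ simplicial_map_hom[OF f]] smap_cone_hom[OF a])
next
  fix m k \<theta> \<phi> assume \<theta>: "S k \<theta>" and \<phi>: "dmap m k \<phi>"
  have "smor Y m k \<phi> \<cdot> (f k \<cdot> a k \<theta>) = f m \<cdot> (smor X m k \<phi> \<cdot> a k \<theta>)"
    using simplicial_map_natural_point[OF f smap_cone_hom[OF a, OF \<theta>] \<phi>] by simp
  then show "smor Y m k \<phi> \<cdot> (f k \<cdot> a k \<theta>) = f m \<cdot> a m (dcomp m \<theta> \<phi>)"
    using smap_cone_compat[OF a, OF \<theta> \<phi>] by simp
qed

lemma is_Map_eqI:
  assumes X: "simplicial_object C X" and M: "is_Map C X S M \<pi>"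
    and u: "u \<in> hom C U M" "u' \<in> hom C U M" and eq: "\<And>m \<theta>. S m \<theta> \<Longrightarrow> \<pi> m \<theta> \<cdot> u = \<pi> m \<theta> \<cdot> u'"
  shows "u = u'"
proof -
  have "smap_cone C X S U (\<lambda>m \<theta>. \<pi> m \<theta> \<cdot> u)"
    using smap_cone_comp[OF X is_Map_cone[OF M] u(1)] .
  from is_Map_universal[OF M this]
  have "\<exists>!v. v \<in> hom C U M \<and> (\<forall>m \<theta>. S m \<theta> \<longrightarrow> \<pi> m \<theta> \<cdot> v = \<pi> m \<theta> \<cdot> u)" .
  moreover have "\<forall>m \<theta>. S m \<theta> \<longrightarrow> \<pi> m \<theta> \<cdot> u' = \<pi> m \<theta> \<cdot> u" using eq by simp
  ultimately show ?thesis using u by (elim ex1_equality) simp_all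
qed

lemma is_Map_canonical:
  assumes "simplicial_object C X" "simplicial_subset n S" "is_Map C X S M \<pi>"
  obtains c where "c \<in> hom C (sob X n) M" "\<And>m \<theta>. S m \<theta> \<Longrightarrow> \<pi> m \<theta> \<cdot> c = smor X m n \<theta>"
  using is_Map_lift[OF assms(3) smor_cone[OF assms(1,2)]] by blast

end

definition diagram_cone ::
  "('o,'m) cat \<Rightarrow> 'v set \<Rightarrow> 'e set \<Rightarrow> ('e \<Rightarrow> 'v) \<Rightarrow> ('e \<Rightarrow> 'v) \<Rightarrow> ('v \<Rightarrow> 'o) \<Rightarrow> ('e \<Rightarrow> 'm)
     \<Rightarrow> 'o \<Rightarrow> ('v \<Rightarrow> 'm) \<Rightarrow> bool" where
  "diagram_cone C V E src tgt Fo Fm L p \<longleftrightarrow> L \<in> Ob C \<and>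
     (\<forall>v\<in>V. p v \<in> hom C L (Fo v)) \<and> (\<forall>e\<in>E. cmp C (Fm e) (p (src e)) = p (tgt e))"

definition diagram_limit ::
  "('o,'m) cat \<Rightarrow> 'v set \<Rightarrow> 'e set \<Rightarrow> ('e \<Rightarrow> 'v) \<Rightarrow> ('e \<Rightarrow> 'v) \<Rightarrow> ('v \<Rightarrow> 'o) \<Rightarrow> ('e \<Rightarrow> 'm)
     \<Rightarrow> 'o \<Rightarrow> ('v \<Rightarrow> 'm) \<Rightarrow> bool" where
  "diagram_limit C V E src tgt Fo Fm L p \<longleftrightarrow> diagram_cone C V E src tgt Fo Fm L p \<and>
     (\<forall>L' p'. diagram_cone C V E src tgt Fo Fm L' p' \<longrightarrow>
        (\<exists>!u. u \<in> hom C L' L \<and> (\<forall>v\<in>V. cmp C (p v) u = p' v)))"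

lemma diagram_limit_cone: "diagram_limit C V E src tgt Fo Fm L p \<Longrightarrow> diagram_cone C V E src tgt Fo Fm L p"
  unfolding diagram_limit_def by (rule conjunct1)

lemma diagram_limit_universal:
  "diagram_limit C V E src tgt Fo Fm L p \<Longrightarrow> diagram_cone C V E src tgt Fo Fm L' p' \<Longrightarrow>
   \<exists>!u. u \<in> hom C L' L \<and> (\<forall>v\<in>V. cmp C (p v) u = p' v)"
  unfolding diagram_limit_def by simp

definition diagram :: "('o,'m) cat \<Rightarrow> 'v set \<Rightarrow> 'e set \<Rightarrow> ('e \<Rightarrow> 'v) \<Rightarrow> ('e \<Rightarrow> 'v) \<Rightarrow> ('v \<Rightarrow> 'o) \<Rightarrow> ('e \<Rightarrow> 'm) \<Rightarrow> bool" where
  "diagram C V E src tgt Fo Fm \<longleftrightarrow> (\<forall>v\<in>V. Fo v \<in> Ob C) \<and>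
     (\<forall>e\<in>E. src e \<in> V \<and> tgt e \<in> V \<and> Fm e \<in> hom C (Fo (src e)) (Fo (tgt e)))"

lemma diagram_cone_cong:
  "(\<And>v. v \<in> V \<Longrightarrow> p v = q v) \<Longrightarrow> (\<And>e. e \<in> E \<Longrightarrow> src e \<in> V \<and> tgt e \<in> V) \<Longrightarrow>
   diagram_cone C V E src tgt Fo Fm L p \<longleftrightarrow> diagram_cone C V E src tgt Fo Fm L q"
  unfolding diagram_cone_def by auto

lemma diagram_cone_reindex:
  assumes hv: "bij_betw hv V' V" and he: "bij_betw he E' E" and edges: "\<And>e. e \<in> E \<Longrightarrow> src e \<in> V \<and> tgt e \<in> V"
  shows "diagram_cone C V E src tgt Fo Fm L q \<longleftrightarrow>
    diagram_cone C V' E' (inv_into V' hv \<circ> src \<circ> he) (inv_into V' hv \<circ> tgt \<circ> he) (Fo \<circ> hv) (Fm \<circ> he) L (q \<circ> hv)"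
proof -
  have hv_inv: "hv (inv_into V' hv v) = v" if "v \<in> V" for v
    using hv that by (simp add: bij_betw_def f_inv_into_f)
  have "(\<forall>v\<in>V. q v \<in> hom C L (Fo v)) \<longleftrightarrow> (\<forall>v'\<in>V'. q (hv v') \<in> hom C L (Fo (hv v')))"
    using hv by (auto simp: bij_betw_def)
  moreover have "(\<forall>e\<in>E. cmp C (Fm e) (q (src e)) = q (tgt e)) \<longleftrightarrow>
      (\<forall>e'\<in>E'. cmp C (Fm (he e')) (q (hv (inv_into V' hv (src (he e'))))) = q (hv (inv_into V' hv (tgt (he e')))))"
    using he edges hv_inv by (auto simp: bij_betw_def)
  ultimately show ?thesis unfolding diagram_cone_def by simp
qed

lemma graph_cone_eq_diagram_cone: "graph_cone = diagram_cone"
  by (intro ext) (simp add: graph_cone_def diagram_cone_def)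

lemma has_finite_limitsD:
  fixes V E :: "nat set"
  assumes "has_finite_limits C" "finite V" "finite E" "diagram C V E src tgt Fo Fm"
  shows "\<exists>L p. diagram_limit C V E src tgt Fo Fm L p"
proof -
  have "(\<forall>v\<in>V. Fo v \<in> Ob C) \<and> (\<forall>e\<in>E. src e \<in> V \<and> tgt e \<in> V \<and> Fm e \<in> hom C (Fo (src e)) (Fo (tgt e)))"
    using assms(4) unfolding diagram_def .
  with assms(1-3) show ?thesis
    unfolding has_finite_limits_def graph_cone_eq_diagram_cone diagram_limit_def by blast
qed

text \<open>\<open>has_finite_limits\<close> only speaks of diagrams indexed by sets of natural numbers;
  a finite diagram indexed by any type is transported to one of those along enumerations.\<close>

lemma finite_diagram_limit_exists:
  assumes limits: "has_finite_limits C" and V: "finite V" and E: "finite E"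
    and D: "diagram C V E src tgt Fo Fm"
  obtains L p where "diagram_limit C V E src tgt Fo Fm L p"
proof -
  obtain hv where hv: "bij_betw hv {0..<card V} V" using ex_bij_betw_nat_finite[OF V] by blast
  obtain he where he: "bij_betw he {0..<card E} E" using ex_bij_betw_nat_finite[OF E] by blast
  define V' where "V' = {0..<card V}"
  define E' where "E' = {0..<card E}"
  define iv where "iv = inv_into V' hv"
  have edges: "\<And>e. e \<in> E \<Longrightarrow> src e \<in> V \<and> tgt e \<in> V" using D unfolding diagram_def by blast
  have iv: "iv v \<in> V'" "hv (iv v) = v" if "v \<in> V" for v
    using hv that unfolding iv_def V'_def bij_betw_def by (metis inv_into_into, metis f_inv_into_f)
  have iv_hv: "iv (hv v') = v'" if "v' \<in> V'" for v'
    using hv that unfolding iv_def V'_def by (simp add: bij_betw_def)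
  have hv_V: "hv v' \<in> V" if "v' \<in> V'" for v' using hv that unfolding V'_def bij_betw_def by blast
  have he_E: "he e' \<in> E" if "e' \<in> E'" for e' using he that unfolding E'_def bij_betw_def by blast
  define src' where "src' = iv \<circ> src \<circ> he"
  define tgt' where "tgt' = iv \<circ> tgt \<circ> he"
  have reindex: "diagram_cone C V E src tgt Fo Fm L' q \<longleftrightarrow>
      diagram_cone C V' E' src' tgt' (Fo \<circ> hv) (Fm \<circ> he) L' (q \<circ> hv)" for L' q
    unfolding src'_def tgt'_def iv_def V'_def E'_def using hv he edges by (rule diagram_cone_reindex)
  have edges': "src' e' \<in> V' \<and> tgt' e' \<in> V'" if "e' \<in> E'" for e'
    using edges[OF he_E[OF that]] iv unfolding src'_def tgt'_def by simp
  have "diagram C V' E' src' tgt' (Fo \<circ> hv) (Fm \<circ> he)"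
    using D edges' hv_V he_E iv(2) edges unfolding diagram_def src'_def tgt'_def by auto
  then obtain L p' where lim': "diagram_limit C V' E' src' tgt' (Fo \<circ> hv) (Fm \<circ> he) L p'"
    using has_finite_limitsD[OF limits] unfolding V'_def E'_def by blast
  define p where "p = p' \<circ> iv"
  have "diagram_cone C V' E' src' tgt' (Fo \<circ> hv) (Fm \<circ> he) L (p \<circ> hv)"
    using lim' iv_hv edges' unfolding diagram_limit_def p_def by (subst diagram_cone_cong) auto
  then have "diagram_cone C V E src tgt Fo Fm L p" by (simp add: reindex)
  moreover have "\<exists>!u. u \<in> hom C L' L \<and> (\<forall>v\<in>V. cmp C (p v) u = q v)"
    if q: "diagram_cone C V E src tgt Fo Fm L' q" for L' q
  proof -
    have "(\<forall>v'\<in>V'. cmp C (p' v') u = (q \<circ> hv) v') \<longleftrightarrow> (\<forall>v\<in>V. cmp C (p v) u = q v)" for u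
      using hv_V iv iv_hv unfolding p_def by (metis comp_apply)
    moreover have "\<exists>!u. u \<in> hom C L' L \<and> (\<forall>v'\<in>V'. cmp C (p' v') u = (q \<circ> hv) v')"
      using lim' q unfolding diagram_limit_def reindex by blast
    ultimately show ?thesis by simp
  qed
  ultimately show ?thesis using that unfolding diagram_limit_def by blast
qed

lemma is_pullback_square:
  "is_pullback C r s P p1 p2 \<Longrightarrow> p1 \<in> hom C P (cdom C r) \<and> p2 \<in> hom C P (cdom C s) \<and> cmp C r p1 = cmp C s p2"
  unfolding is_pullback_def by blast

lemma is_pullback_universal:
  "is_pullback C r s P p1 p2 \<Longrightarrow> Q \<in> Ob C \<Longrightarrow> q1 \<in> hom C Q (cdom C r) \<Longrightarrow>
   q2 \<in> hom C Q (cdom C s) \<Longrightarrow> cmp C r q1 = cmp C s q2 \<Longrightarrow>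
   \<exists>!u. u \<in> hom C Q P \<and> cmp C p1 u = q1 \<and> cmp C p2 u = q2"
  unfolding is_pullback_def by blast

lemma (in category) pullback_universal:
  assumes pb: "is_pullback C r s P p1 p2" and r: "r \<in> hom C A Z" and s: "s \<in> hom C B Z"
    and q: "q1 \<in> hom C Q A" "q2 \<in> hom C Q B" "r \<cdot> q1 = s \<cdot> q2"
  shows "\<exists>!u. u \<in> hom C Q P \<and> p1 \<cdot> u = q1 \<and> p2 \<cdot> u = q2"
proof -
  have "cdom C r = A" "cdom C s = B" using r s unfolding hom_def by auto
  then show ?thesis using is_pullback_universal[OF pb _ _ _ q(3)] hom_objs[OF q(1)] q(1,2) by simp
qed

lemma (in category) pullback_square:
  assumes pb: "is_pullback C r s P p1 p2" and r: "r \<in> hom C A Z" and s: "s \<in> hom C B Z"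
  shows "p1 \<in> hom C P A" "p2 \<in> hom C P B" "r \<cdot> p1 = s \<cdot> p2"
  using is_pullback_square[OF pb] r s unfolding hom_def by auto

locale finitely_complete_category = category +
  assumes finite_limits: "has_finite_limits C"
begin

lemma pullback_exists:
  assumes r: "r \<in> hom C A Z" and s: "s \<in> hom C B Z"
  obtains P p1 p2 where "is_pullback C r s P p1 p2"
proof -
  define Fo where "Fo = (\<lambda>v::nat. if v = 0 then A else if v = 1 then B else Z)"
  define Fm where "Fm = (\<lambda>e::nat. if e = 0 then r else s)"
  have "diagram C {0, 1, 2} {0, 1} id (\<lambda>_. 2) Fo Fm"
    using hom_objs[OF r] hom_objs[OF s] r s unfolding diagram_def Fo_def Fm_def by auto
  then obtain L p where lim: "diagram_limit C {0, 1, 2} {0, 1} id (\<lambda>_. 2) Fo Fm L p"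
    by (rule finite_diagram_limit_exists[OF finite_limits, rotated 2]) simp_all
  have cone_iff: "diagram_cone C {0, 1, 2} {0, 1} id (\<lambda>_. 2) Fo Fm Q q \<longleftrightarrow>
      Q \<in> Ob C \<and> q 0 \<in> hom C Q A \<and> q 1 \<in> hom C Q B \<and> q 2 = r \<cdot> q 0 \<and> s \<cdot> q 1 = r \<cdot> q 0" for Q q
    using comp_hom[OF _ r] unfolding diagram_cone_def Fo_def Fm_def by auto
  have rs: "cdom C r = A" "cdom C s = B" "ccod C r = Z" "ccod C s = Z" "r \<in> Ar C" "s \<in> Ar C"
    using r s unfolding hom_def by auto
  have p: "L \<in> Ob C" "p 0 \<in> hom C L A" "p 1 \<in> hom C L B" "p 2 = r \<cdot> p 0" "s \<cdot> p 1 = r \<cdot> p 0"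
    using lim unfolding diagram_limit_def cone_iff by blast+
  have "is_pullback C r s L (p 0) (p 1)"
    unfolding is_pullback_def
  proof (intro conjI allI impI)
    fix Q q1 q2
    assume "Q \<in> Ob C \<and> q1 \<in> hom C Q (cdom C r) \<and> q2 \<in> hom C Q (cdom C s) \<and> r \<cdot> q1 = s \<cdot> q2"
    then have q: "Q \<in> Ob C" "q1 \<in> hom C Q A" "q2 \<in> hom C Q B" "s \<cdot> q2 = r \<cdot> q1" using rs by auto
    define q where "q = (\<lambda>v::nat. if v = 0 then q1 else if v = 1 then q2 else r \<cdot> q1)"
    have "diagram_cone C {0, 1, 2} {0, 1} id (\<lambda>_. 2) Fo Fm Q q" unfolding cone_iff q_def using q by simp
    then have unique: "\<exists>!u. u \<in> hom C Q L \<and> (\<forall>v\<in>{0, 1, 2}. p v \<cdot> u = q v)"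
      using lim unfolding diagram_limit_def by blast
    have "(\<forall>v\<in>{0, 1, 2}. p v \<cdot> u = q v) \<longleftrightarrow> p 0 \<cdot> u = q1 \<and> p 1 \<cdot> u = q2" if "u \<in> hom C Q L" for u
      using comp_assoc[OF that p(2) r] p(4) unfolding q_def by auto
    with unique show "\<exists>!u. u \<in> hom C Q L \<and> p 0 \<cdot> u = q1 \<and> p 1 \<cdot> u = q2"
      by (subst (asm) ex1_conj_cong) simp_all
  next
    show "p 0 \<in> hom C L (cdom C r)" "p 1 \<in> hom C L (cdom C s)" "r \<cdot> p 0 = s \<cdot> p 1"
      using p rs by simp_all
  qed (use rs p in simp_all)
  then show ?thesis by (rule that)
qed

end

section \<open>Existence of the objects \<open>Map(S, X)\<close>\<close>

definition truncated_cone ::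
  "('o,'m) cat \<Rightarrow> ('o,'m) sobj \<Rightarrow> (nat \<Rightarrow> (nat \<Rightarrow> nat) \<Rightarrow> bool) \<Rightarrow> nat \<Rightarrow> 'o \<Rightarrow> (nat \<Rightarrow> (nat \<Rightarrow> nat) \<Rightarrow> 'm) \<Rightarrow> bool" where
  "truncated_cone C X S n U b \<longleftrightarrow> U \<in> Ob C \<and>
     (\<forall>m \<theta>. m \<le> n \<and> S m \<theta> \<longrightarrow> b m \<theta> \<in> hom C U (sob X m)) \<and>
     (\<forall>m k \<theta> \<phi>. m \<le> n \<and> k \<le> n \<and> S k \<theta> \<and> dmap m k \<phi> \<longrightarrow>
        cmp C (smor X m k \<phi>) (b k \<theta>) = b m (dcomp m \<theta> \<phi>))"

lemma truncated_cone_hom: "truncated_cone C X S n U b \<Longrightarrow> m \<le> n \<Longrightarrow> S m \<theta> \<Longrightarrow> b m \<theta> \<in> hom C U (sob X m)"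
  unfolding truncated_cone_def by blast

lemma truncated_cone_compat:
  "truncated_cone C X S n U b \<Longrightarrow> m \<le> n \<Longrightarrow> k \<le> n \<Longrightarrow> S k \<theta> \<Longrightarrow> dmap m k \<phi> \<Longrightarrow>
   cmp C (smor X m k \<phi>) (b k \<theta>) = b m (dcomp m \<theta> \<phi>)"
  unfolding truncated_cone_def by blast

lemma smap_cone_truncated: "smap_cone C X S U a \<Longrightarrow> truncated_cone C X S n U a"
  unfolding smap_cone_def truncated_cone_def by blast

definition epi_mono_factor :: "nat \<Rightarrow> nat \<Rightarrow> (nat \<Rightarrow> nat) \<Rightarrow> nat \<times> (nat \<Rightarrow> nat) \<times> (nat \<Rightarrow> nat)" where
  "epi_mono_factor m n \<theta> = (SOME (m', \<iota>, \<pi>). epi_mono_factorization m n \<theta> m' \<iota> \<pi>)"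

lemma epi_mono_factor_eq: "epi_mono_factorization m n \<theta> m' \<iota> \<pi> \<Longrightarrow> epi_mono_factor m n \<theta> = (m', \<iota>, \<pi>)"
proof -
  assume f: "epi_mono_factorization m n \<theta> m' \<iota> \<pi>"
  then have "\<exists>t. case t of (m', \<iota>, \<pi>) \<Rightarrow> epi_mono_factorization m n \<theta> m' \<iota> \<pi>" by auto
  then have "case epi_mono_factor m n \<theta> of (m', \<iota>, \<pi>) \<Rightarrow> epi_mono_factorization m n \<theta> m' \<iota> \<pi>"
    unfolding epi_mono_factor_def by (rule someI_ex)
  with epi_mono_factorization_unique[OF f] show ?thesis by (cases "epi_mono_factor m n \<theta>") auto
qed

lemma epi_mono_factorization_in_subset:
  assumes S: "simplicial_subset n S" and \<theta>: "S m \<theta>" and f: "epi_mono_factorization m n \<theta> m' \<iota> \<pi>"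
  shows "S m' \<iota>"
proof -
  have "\<iota> ` {0..m'} = \<theta> ` {0..m}"
    using f image_dcomp[of m m' \<pi> \<iota>] unfolding epi_mono_factorization_def by auto
  then show ?thesis
    using f simplicial_subset_image_subset[OF S, OF \<theta>] unfolding epi_mono_factorization_def by auto
qed

text \<open>Every simplex of a simplicial subset of \<open>\<Delta>\<^sup>n\<close> is a degeneracy of one of dimension at most \<open>n\<close>
  (its epi-mono factorization), so a cone is determined by its truncation at level \<open>n\<close>.\<close>

definition cone_extension ::
  "('o,'m) cat \<Rightarrow> ('o,'m) sobj \<Rightarrow> nat \<Rightarrow> (nat \<Rightarrow> (nat \<Rightarrow> nat) \<Rightarrow> 'm) \<Rightarrow> nat \<Rightarrow> (nat \<Rightarrow> nat) \<Rightarrow> 'm" where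
  "cone_extension C X n b m \<theta> = (case epi_mono_factor m n \<theta> of (m', \<iota>, \<pi>) \<Rightarrow> cmp C (smor X m m' \<pi>) (b m' \<iota>))"

lemma cone_extension_eq:
  "epi_mono_factorization m n \<theta> m' \<iota> \<pi> \<Longrightarrow> cone_extension C X n b m \<theta> = cmp C (smor X m m' \<pi>) (b m' \<iota>)"
  unfolding cone_extension_def by (simp add: epi_mono_factor_eq)

context category
begin

lemma cone_extension_dcomp:
  assumes X: "simplicial_object C X" and S: "simplicial_subset n S" and b: "truncated_cone C X S n U b"
    and \<iota>: "m' \<le> n" "S m' \<iota>" and \<pi>: "dmap m m' \<pi>"
  shows "cone_extension C X n b m (dcomp m \<iota> \<pi>) = smor X m m' \<pi> \<cdot> b m' \<iota>"
proof -
  obtain mp \<iota>p \<pi>p where p: "epi_mono_factorization m m' \<pi> mp \<iota>p \<pi>p"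
    using epi_mono_factorization_exists[OF \<pi>] .
  have p': "dmap mp m' \<iota>p" "dmap m mp \<pi>p" "\<pi>p ` {0..m} = {0..mp}" "dcomp m \<iota>p \<pi>p = \<pi>" "mp \<le> m'"
    using p epi_mono_factorization_dim[OF p] unfolding epi_mono_factorization_def by auto
  have \<iota>': "dmap m' n \<iota>" using simplicial_subset_dmap[OF S, OF \<iota>(2)] .
  obtain mq \<iota>q \<pi>q where q: "epi_mono_factorization mp n (dcomp mp \<iota> \<iota>p) mq \<iota>q \<pi>q"
    using epi_mono_factorization_exists[OF dmap_dcomp[OF p'(1) \<iota>']] .
  have q': "dmap mp mq \<pi>q" "\<pi>q ` {0..mp} = {0..mq}" "dcomp mp \<iota>q \<pi>q = dcomp mp \<iota> \<iota>p" "mq \<le> n"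
    using q epi_mono_factorization_dim[OF q] unfolding epi_mono_factorization_def by auto
  have Sq: "S mq \<iota>q"
    using epi_mono_factorization_in_subset[OF S, OF simplicial_subset_dcomp[OF S, OF \<iota>(2) p'(1)] q] .
  have "epi_mono_factorization m n (dcomp m \<iota> \<pi>) mq \<iota>q (dcomp m \<pi>q \<pi>p)"
    using q dmap_dcomp[OF p'(2) q'(1)] image_dcomp[OF p'(2), of \<pi>q] p'(3,4) q'(2,3) dcomp_assoc[OF p'(2)]
    unfolding epi_mono_factorization_def by metis
  then have "cone_extension C X n b m (dcomp m \<iota> \<pi>) = smor X m mq (dcomp m \<pi>q \<pi>p) \<cdot> b mq \<iota>q"
    by (rule cone_extension_eq)
  also have "\<dots> = smor X m mp \<pi>p \<cdot> (smor X mp mq \<pi>q \<cdot> b mq \<iota>q)"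
    using smor_comp_point[OF X p'(2) q'(1) truncated_cone_hom[OF b, OF q'(4) Sq]] by simp
  also have "\<dots> = smor X m mp \<pi>p \<cdot> (smor X mp m' \<iota>p \<cdot> b m' \<iota>)"
    using truncated_cone_compat[OF b, OF _ q'(4) Sq q'(1)] truncated_cone_compat[OF b, OF _ \<iota>(1,2) p'(1)]
      p'(5) \<iota>(1) q'(3) by simp
  also have "\<dots> = smor X m m' \<pi> \<cdot> b m' \<iota>"
    using smor_comp_point[OF X p'(2) p'(1) truncated_cone_hom[OF b, OF \<iota>]] p'(4) by simp
  finally show ?thesis .
qed

lemma cone_extension_truncation:
  assumes X: "simplicial_object C X" and S: "simplicial_subset n S" and b: "truncated_cone C X S n U b"
    and \<theta>: "m \<le> n" "S m \<theta>"
  shows "cone_extension C X n b m \<theta> = b m \<theta>"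
  using cone_extension_dcomp[OF X S b, OF \<theta> dmap_did] simplicial_subset_dmap[OF S, OF \<theta>(2)]
    smor_did_point[OF X truncated_cone_hom[OF b, OF \<theta>]] by (simp add: dcomp_did_right)

lemma cone_extension_factor:
  assumes S: "simplicial_subset n S" and \<theta>: "S m \<theta>"
  obtains m' \<iota> \<pi> where "m' \<le> n" "S m' \<iota>" "dmap m m' \<pi>" "dcomp m \<iota> \<pi> = \<theta>"
    "cone_extension C X n b m \<theta> = smor X m m' \<pi> \<cdot> b m' \<iota>"
proof -
  obtain m' \<iota> \<pi> where f: "epi_mono_factorization m n \<theta> m' \<iota> \<pi>"
    using epi_mono_factorization_exists[OF simplicial_subset_dmap[OF S, OF \<theta>]] .
  then show ?thesis
    using that epi_mono_factorization_dim[OF f] epi_mono_factorization_in_subset[OF S, OF \<theta> f] cone_extension_eq[OF f]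
    unfolding epi_mono_factorization_def by blast
qed

lemma cone_extension_cone:
  assumes X: "simplicial_object C X" and S: "simplicial_subset n S" and b: "truncated_cone C X S n U b"
  shows "smap_cone C X S U (cone_extension C X n b)"
proof (rule smap_coneI)
  show "U \<in> Ob C" using b unfolding truncated_cone_def by blast
  fix m \<theta> assume "S m \<theta>"
  then obtain m' \<iota> \<pi> where f: "m' \<le> n" "S m' \<iota>" "dmap m m' \<pi>"
    and "cone_extension C X n b m \<theta> = smor X m m' \<pi> \<cdot> b m' \<iota>"
    by (rule cone_extension_factor[OF S])
  then show "cone_extension C X n b m \<theta> \<in> hom C U (sob X m)"
    using comp_hom[OF truncated_cone_hom[OF b, OF f(1,2)] simplicial_object_smor_hom[OF X f(3)]] by simp
next
  fix m k \<theta> \<phi> assume \<theta>: "S k \<theta>" and \<phi>: "dmap m k \<phi>"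
  obtain m' \<iota> \<pi> where f: "m' \<le> n" "S m' \<iota>" "dmap k m' \<pi>" "dcomp k \<iota> \<pi> = \<theta>"
    "cone_extension C X n b k \<theta> = smor X k m' \<pi> \<cdot> b m' \<iota>"
    by (rule cone_extension_factor[OF S, OF \<theta>])
  have "smor X m k \<phi> \<cdot> cone_extension C X n b k \<theta> = smor X m m' (dcomp m \<pi> \<phi>) \<cdot> b m' \<iota>"
    using smor_comp_point[OF X \<phi> f(3) truncated_cone_hom[OF b, OF f(1,2)]] f(5) by simp
  also have "\<dots> = cone_extension C X n b m (dcomp m \<iota> (dcomp m \<pi> \<phi>))"
    using cone_extension_dcomp[OF X S b, OF f(1,2) dmap_dcomp[OF \<phi> f(3)]] by simp
  also have "\<dots> = cone_extension C X n b m (dcomp m \<theta> \<phi>)"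
    using dcomp_assoc[OF \<phi>, of \<iota> \<pi>] f(4) by simp
  finally show "smor X m k \<phi> \<cdot> cone_extension C X n b k \<theta> = cone_extension C X n b m (dcomp m \<theta> \<phi>)" .
qed

lemma cone_extension_comp_iff:
  assumes X: "simplicial_object C X" and S: "simplicial_subset n S" and b: "truncated_cone C X S n L b"
    and a: "smap_cone C X S U a" and u: "u \<in> hom C U L"
  shows "(\<forall>m \<theta>. S m \<theta> \<longrightarrow> cone_extension C X n b m \<theta> \<cdot> u = a m \<theta>) \<longleftrightarrow>
    (\<forall>m \<theta>. m \<le> n \<and> S m \<theta> \<longrightarrow> b m \<theta> \<cdot> u = a m \<theta>)"
proof
  assume "\<forall>m \<theta>. S m \<theta> \<longrightarrow> cone_extension C X n b m \<theta> \<cdot> u = a m \<theta>"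
  then show "\<forall>m \<theta>. m \<le> n \<and> S m \<theta> \<longrightarrow> b m \<theta> \<cdot> u = a m \<theta>"
    using cone_extension_truncation[OF X S b] by metis
next
  assume low: "\<forall>m \<theta>. m \<le> n \<and> S m \<theta> \<longrightarrow> b m \<theta> \<cdot> u = a m \<theta>"
  show "\<forall>m \<theta>. S m \<theta> \<longrightarrow> cone_extension C X n b m \<theta> \<cdot> u = a m \<theta>"
  proof (intro allI impI)
    fix m \<theta> assume "S m \<theta>"
    then obtain m' \<iota> \<pi> where f: "m' \<le> n" "S m' \<iota>" "dmap m m' \<pi>" "dcomp m \<iota> \<pi> = \<theta>"
      "cone_extension C X n b m \<theta> = smor X m m' \<pi> \<cdot> b m' \<iota>"
      by (rule cone_extension_factor[OF S])
    have "cone_extension C X n b m \<theta> \<cdot> u = smor X m m' \<pi> \<cdot> (b m' \<iota> \<cdot> u)"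
      using comp_assoc[OF u truncated_cone_hom[OF b, OF f(1,2)] simplicial_object_smor_hom[OF X f(3)]] f(5)
      by simp
    also have "\<dots> = a m \<theta>"
      using low f(1,2) smap_cone_compat[OF a, OF f(2,3)] f(4) by simp
    finally show "cone_extension C X n b m \<theta> \<cdot> u = a m \<theta>" .
  qed
qed

end

lemma finite_dmaps: "finite {\<theta>. \<exists>m k. m \<le> n \<and> k \<le> n \<and> dmap m k \<theta>}"
proof (rule finite_subset)
  show "{\<theta>. \<exists>m k. m \<le> n \<and> k \<le> n \<and> dmap m k \<theta>} \<subseteq>
    {\<theta>. \<forall>x. (x \<in> {0..n} \<longrightarrow> \<theta> x \<in> {0..n}) \<and> (x \<notin> {0..n} \<longrightarrow> \<theta> x = 0)}"
  proof (clarify, intro allI conjI impI)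
    fix \<theta> x m k assume mk: "m \<le> n" "k \<le> n" and \<theta>: "dmap m k \<theta>"
    show "\<theta> x \<in> {0..n}"
      using dmap_le[OF \<theta>, of x] dmap_out[OF \<theta>, of x] mk by (cases "x \<le> m") auto
    show "x \<notin> {0..n} \<Longrightarrow> \<theta> x = 0" using dmap_out[OF \<theta>, of x] mk by auto
  qed
  show "finite {\<theta>::nat \<Rightarrow> nat. \<forall>x. (x \<in> {0..n} \<longrightarrow> \<theta> x \<in> {0..n}) \<and> (x \<notin> {0..n} \<longrightarrow> \<theta> x = 0)}"
    by (rule finite_set_of_finite_funs) auto
qed

context finitely_complete_category
begin

text \<open>The truncated cones are the cones over a finite diagram: its vertices are the simplices of
  \<open>S\<close> of dimension at most \<open>n\<close>, its edges the simplicial operators between them.\<close>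

lemma truncated_limit_exists:
  assumes X: "simplicial_object C X" and S: "simplicial_subset n S"
  obtains L b where "truncated_cone C X S n L b"
    "\<And>U b'. truncated_cone C X S n U b' \<Longrightarrow>
       \<exists>!u. u \<in> hom C U L \<and> (\<forall>m \<theta>. m \<le> n \<and> S m \<theta> \<longrightarrow> b m \<theta> \<cdot> u = b' m \<theta>)"
proof -
  define V where "V = {(m, \<theta>). m \<le> n \<and> S m \<theta>}"
  define E where "E = {(m, k, \<theta>, \<phi>). m \<le> n \<and> k \<le> n \<and> S k \<theta> \<and> dmap m k \<phi>}"
  define src :: "nat \<times> nat \<times> (nat \<Rightarrow> nat) \<times> (nat \<Rightarrow> nat) \<Rightarrow> nat \<times> (nat \<Rightarrow> nat)"
    where "src = (\<lambda>(m, k, \<theta>, \<phi>). (k, \<theta>))"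
  define tgt :: "nat \<times> nat \<times> (nat \<Rightarrow> nat) \<times> (nat \<Rightarrow> nat) \<Rightarrow> nat \<times> (nat \<Rightarrow> nat)"
    where "tgt = (\<lambda>(m, k, \<theta>, \<phi>). (m, dcomp m \<theta> \<phi>))"
  define Fo where "Fo = (\<lambda>(m, \<theta>::nat \<Rightarrow> nat). sob X m)"
  define Fm where "Fm = (\<lambda>(m, k, \<theta>::nat \<Rightarrow> nat, \<phi>). smor X m k \<phi>)"
  have dmaps: "dmap k n \<theta>" if "S k \<theta>" for k \<theta> using simplicial_subset_dmap[OF S, OF that] .
  define F where "F = {\<theta>. \<exists>m k. m \<le> n \<and> k \<le> n \<and> dmap m k \<theta>}"
  have "V \<subseteq> {0..n} \<times> F" using dmaps unfolding V_def F_def by auto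
  then have finV: "finite V" using finite_dmaps unfolding F_def by (meson finite_SigmaI finite_atLeastAtMost finite_subset)
  have "E \<subseteq> {0..n} \<times> {0..n} \<times> F \<times> F" using dmaps unfolding E_def F_def by auto
  then have finE: "finite E" using finite_dmaps unfolding F_def by (meson finite_SigmaI finite_atLeastAtMost finite_subset)
  have D: "diagram C V E src tgt Fo Fm"
    unfolding diagram_def V_def E_def src_def tgt_def Fo_def Fm_def
    using simplicial_object_sob[OF X] simplicial_object_smor_hom[OF X] simplicial_subset_dcomp[OF S] by auto
  have cone_iff: "diagram_cone C V E src tgt Fo Fm U (case_prod b) \<longleftrightarrow> truncated_cone C X S n U b" for U b
    unfolding diagram_cone_def truncated_cone_def V_def E_def src_def tgt_def Fo_def Fm_def by auto
  obtain L p where lim: "diagram_limit C V E src tgt Fo Fm L p"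
    using finite_diagram_limit_exists[OF finite_limits finV finE D] .
  show ?thesis
  proof (rule that)
    have "diagram_cone C V E src tgt Fo Fm L (case_prod (curry p))"
      using diagram_limit_cone[OF lim] by simp
    then show "truncated_cone C X S n L (curry p)" by (simp only: cone_iff)
    fix U b' assume "truncated_cone C X S n U b'"
    then have "\<exists>!u. u \<in> hom C U L \<and> (\<forall>v\<in>V. p v \<cdot> u = case_prod b' v)"
      by (intro diagram_limit_universal[OF lim]) (simp only: cone_iff)
    moreover have "(\<forall>v\<in>V. p v \<cdot> u = case_prod b' v) \<longleftrightarrow> (\<forall>m \<theta>. m \<le> n \<and> S m \<theta> \<longrightarrow> curry p m \<theta> \<cdot> u = b' m \<theta>)" for u
      unfolding V_def by auto
    ultimately show "\<exists>!u. u \<in> hom C U L \<and> (\<forall>m \<theta>. m \<le> n \<and> S m \<theta> \<longrightarrow> curry p m \<theta> \<cdot> u = b' m \<theta>)"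
      by simp
  qed
qed

lemma Map_exists:
  assumes X: "simplicial_object C X" and S: "simplicial_subset n S"
  obtains M \<pi> where "is_Map C X S M \<pi>"
proof -
  obtain L b where b: "truncated_cone C X S n L b"
    and univ: "\<And>U b'. truncated_cone C X S n U b' \<Longrightarrow>
       \<exists>!u. u \<in> hom C U L \<and> (\<forall>m \<theta>. m \<le> n \<and> S m \<theta> \<longrightarrow> b m \<theta> \<cdot> u = b' m \<theta>)"
    by (rule truncated_limit_exists[OF X S]) blast
  have "is_Map C X S L (cone_extension C X n b)"
    unfolding is_Map_def
  proof (intro conjI allI impI)
    show "smap_cone C X S L (cone_extension C X n b)" using cone_extension_cone[OF X S b] .
    fix U a assume a: "smap_cone C X S U a"
    show "\<exists>!u. u \<in> hom C U L \<and> (\<forall>m \<theta>. S m \<theta> \<longrightarrow> cone_extension C X n b m \<theta> \<cdot> u = a m \<theta>)"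
      using univ[OF smap_cone_truncated[OF a]] cone_extension_comp_iff[OF X S b a]
      by (subst ex1_conj_cong) simp_all
  qed
  then show ?thesis by (rule that)
qed

end

lemma effective_epi_universal:
  "effective_epi C f \<Longrightarrow> is_pullback C f f P p1 p2 \<Longrightarrow> Z \<in> Ob C \<Longrightarrow> h \<in> hom C (cdom C f) Z \<Longrightarrow>
   cmp C h p1 = cmp C h p2 \<Longrightarrow> \<exists>!u. u \<in> hom C (ccod C f) Z \<and> cmp C u f = h"
  unfolding effective_epi_def by blast

lemma canon_Map_propD:
  "canon_Map_prop C X S n P \<Longrightarrow> is_Map C X S M \<pi> \<Longrightarrow> c \<in> hom C (sob X n) M \<Longrightarrow>
   (\<And>m \<theta>. S m \<theta> \<Longrightarrow> cmp C (\<pi> m \<theta>) c = smor X m n \<theta>) \<Longrightarrow> P c"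
  unfolding canon_Map_prop_def by blast

lemma k_groupoid_horn_canon_iso:
  "k_groupoid C Cov k Z \<Longrightarrow> k < n \<Longrightarrow> i \<le> n \<Longrightarrow> canon_Map_prop C Z (horn n i) n (iso C)"
  unfolding k_groupoid_def by simp

locale subcanonical_descent_category =
  fixes C :: "('o, 'm) cat" and Cov :: "'m set"
  assumes descent: "descent_category C Cov" and subcanonical: "subcanonical C Cov"
begin

sublocale finitely_complete_category C
  using descent unfolding descent_category_def by unfold_locales blast+

lemma cover_effective_epi: "c \<in> Cov \<Longrightarrow> effective_epi C c"
  using subcanonical unfolding subcanonical_def by blast

lemma cover_pullback: "c \<in> Cov \<Longrightarrow> is_pullback C c g P p1 p2 \<Longrightarrow> p2 \<in> Cov"
  using descent unfolding descent_category_def by blast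

lemma cover_cancel_right:
  assumes e: "e \<in> Cov" "e \<in> hom C Q U" and h: "h1 \<in> hom C U Z" "h2 \<in> hom C U Z" and eq: "h1 \<cdot> e = h2 \<cdot> e"
  shows "h1 = h2"
proof -
  obtain P p1 p2 where pb: "is_pullback C e e P p1 p2" using pullback_exists[OF e(2) e(2)] .
  have de: "cdom C e = Q" "ccod C e = U" using e(2) unfolding hom_def by auto
  have p: "p1 \<in> hom C P Q" "p2 \<in> hom C P Q" "e \<cdot> p1 = e \<cdot> p2" using pullback_square[OF pb e(2) e(2)] .
  have "(h1 \<cdot> e) \<cdot> p1 = (h1 \<cdot> e) \<cdot> p2"
    using comp_assoc[OF p(1) e(2) h(1)] comp_assoc[OF p(2) e(2) h(1)] p(3) by simp
  then have "\<exists>!u. u \<in> hom C U Z \<and> u \<cdot> e = h1 \<cdot> e"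
    using effective_epi_universal[OF cover_effective_epi[OF e(1)] pb] comp_hom[OF e(2) h(1)] hom_objs[OF h(1)] de
    by simp
  then show ?thesis using h eq by (elim ex1_equality) simp_all
qed

text \<open>Since a cover is an effective epimorphism, a monic cover \<open>c\<close> has its kernel pair on the
  diagonal, so the identity of its domain factors through \<open>c\<close>.\<close>

lemma mono_cover_iso:
  assumes c: "c \<in> Cov" "c \<in> hom C A B"
    and mono: "\<And>U g1 g2. g1 \<in> hom C U A \<Longrightarrow> g2 \<in> hom C U A \<Longrightarrow> c \<cdot> g1 = c \<cdot> g2 \<Longrightarrow> g1 = g2"
  shows "iso C c"
proof -
  obtain P p1 p2 where pb: "is_pullback C c c P p1 p2" using pullback_exists[OF c(2) c(2)] .
  have dc: "cdom C c = A" "ccod C c = B" using c(2) unfolding hom_def by auto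
  have p: "p1 \<in> hom C P A" "p2 \<in> hom C P A" "c \<cdot> p1 = c \<cdot> p2" using pullback_square[OF pb c(2) c(2)] .
  have AB: "A \<in> Ob C" "B \<in> Ob C" using hom_objs[OF c(2)] by auto
  have "idt C A \<cdot> p1 = idt C A \<cdot> p2" using mono[OF p] by simp
  then have "\<exists>!u. u \<in> hom C B A \<and> u \<cdot> c = idt C A"
    using effective_epi_universal[OF cover_effective_epi[OF c(1)] pb AB(1)] idt_hom[OF AB(1)] dc by simp
  then obtain u where u: "u \<in> hom C B A" "u \<cdot> c = idt C A" by blast
  have "(c \<cdot> u) \<cdot> c = idt C B \<cdot> c"
    using comp_assoc[OF c(2) u(1) c(2)] u(2) comp_idt_left[OF c(2)] comp_idt_right[OF c(2)] by simp
  then have "c \<cdot> u = idt C B"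
    using cover_cancel_right[OF c comp_hom[OF u(1) c(2)] idt_hom[OF AB(2)]] by blast
  then show ?thesis using isoI[OF c(2) u(1) u(2)] by blast
qed

end

context finitely_complete_category
begin

lemma k_groupoid_horn_iso:
  assumes Z: "k_groupoid C Cov k Z" and n: "k < n" "i \<le> n"
  obtains M \<pi> c where "is_Map C Z (horn n i) M \<pi>" "c \<in> hom C (sob Z n) M"
    "\<And>m \<theta>. horn n i m \<theta> \<Longrightarrow> \<pi> m \<theta> \<cdot> c = smor Z m n \<theta>" "iso C c"
proof -
  have Z': "simplicial_object C Z" using Z unfolding k_groupoid_def by blast
  obtain M \<pi> where M: "is_Map C Z (horn n i) M \<pi>"
    using Map_exists[OF Z' simplicial_subset_horn] .
  obtain c where c: "c \<in> hom C (sob Z n) M" "\<And>m \<theta>. horn n i m \<theta> \<Longrightarrow> \<pi> m \<theta> \<cdot> c = smor Z m n \<theta>"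
    by (rule is_Map_canonical[OF Z' simplicial_subset_horn M]) blast
  have "iso C c" using k_groupoid_horn_canon_iso[OF Z n] M c by (rule canon_Map_propD)
  with M c show ?thesis by (rule that)
qed

lemma k_groupoid_horn_unique:
  assumes Z: "k_groupoid C Cov k Z" and n: "k < n" "i \<le> n"
    and z: "z \<in> hom C U (sob Z n)" "z' \<in> hom C U (sob Z n)"
    and eq: "\<And>m \<theta>. horn n i m \<theta> \<Longrightarrow> smor Z m n \<theta> \<cdot> z = smor Z m n \<theta> \<cdot> z'"
  shows "z = z'"
proof -
  have Z': "simplicial_object C Z" using Z unfolding k_groupoid_def by blast
  obtain M \<pi> c where M: "is_Map C Z (horn n i) M \<pi>" and c: "c \<in> hom C (sob Z n) M"
    "\<And>m \<theta>. horn n i m \<theta> \<Longrightarrow> \<pi> m \<theta> \<cdot> c = smor Z m n \<theta>" "iso C c"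
    by (rule k_groupoid_horn_iso[OF Z n]) blast
  have "c \<cdot> z = c \<cdot> z'"
  proof (rule is_Map_eqI[OF Z' M comp_hom[OF z(1) c(1)] comp_hom[OF z(2) c(1)]])
    fix m \<theta> assume h: "horn n i m \<theta>"
    have \<pi>: "\<pi> m \<theta> \<in> hom C M (sob Z m)" using is_Map_proj_hom[OF M, OF h] .
    show "\<pi> m \<theta> \<cdot> (c \<cdot> z) = \<pi> m \<theta> \<cdot> (c \<cdot> z')"
      using comp_assoc[OF z(1) c(1) \<pi>] comp_assoc[OF z(2) c(1) \<pi>] c(2)[OF h] eq[OF h] by simp
  qed
  then show ?thesis using iso_cancel_left[OF c(3) c(1) z] by blast
qed

lemma k_groupoid_horn_fill:
  assumes Z: "k_groupoid C Cov k Z" and n: "k < n" "i \<le> n" and a: "smap_cone C Z (horn n i) U a"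
  obtains z where "z \<in> hom C U (sob Z n)" "\<And>m \<theta>. horn n i m \<theta> \<Longrightarrow> smor Z m n \<theta> \<cdot> z = a m \<theta>"
proof -
  obtain M \<pi> c where M: "is_Map C Z (horn n i) M \<pi>" and c: "c \<in> hom C (sob Z n) M"
    "\<And>m \<theta>. horn n i m \<theta> \<Longrightarrow> \<pi> m \<theta> \<cdot> c = smor Z m n \<theta>" "iso C c"
    by (rule k_groupoid_horn_iso[OF Z n]) blast
  obtain u where u: "u \<in> hom C U M" "\<And>m \<theta>. horn n i m \<theta> \<Longrightarrow> \<pi> m \<theta> \<cdot> u = a m \<theta>"
    by (rule is_Map_lift[OF M a]) blast
  obtain g where g: "g \<in> hom C M (sob Z n)" "c \<cdot> g = idt C M" using iso_inverse[OF c(3) c(1)] .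
  have gu: "g \<cdot> u \<in> hom C U (sob Z n)" using comp_hom[OF u(1) g(1)] .
  have "smor Z m n \<theta> \<cdot> (g \<cdot> u) = a m \<theta>" if h: "horn n i m \<theta>" for m \<theta>
  proof -
    have \<pi>: "\<pi> m \<theta> \<in> hom C M (sob Z m)" using is_Map_proj_hom[OF M, OF h] .
    have "smor Z m n \<theta> \<cdot> (g \<cdot> u) = \<pi> m \<theta> \<cdot> (c \<cdot> (g \<cdot> u))" using c(2)[OF h] comp_assoc[OF gu c(1) \<pi>] by simp
    also have "\<dots> = \<pi> m \<theta> \<cdot> u" using comp_assoc[OF u(1) g(1) c(1)] g(2) comp_idt_left[OF u(1)] by simp
    finally show ?thesis using u(2)[OF h] by simp
  qed
  with gu show ?thesis by (rule that)
qed

end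

section \<open>The relative matching object \<open>Map(S \<hookrightarrow> \<Delta>\<^sup>n, f)\<close>\<close>

context category
begin

lemma mono_split_epi_iso:
  assumes c: "c \<in> hom C A B" and z: "z \<in> hom C B A" and right_inverse: "c \<cdot> z = idt C B"
    and mono: "\<And>g1 g2. g1 \<in> hom C A A \<Longrightarrow> g2 \<in> hom C A A \<Longrightarrow> c \<cdot> g1 = c \<cdot> g2 \<Longrightarrow> g1 = g2"
  shows "iso C c"
proof -
  have A: "A \<in> Ob C" using hom_objs[OF c] by blast
  have "c \<cdot> (z \<cdot> c) = c \<cdot> idt C A"
    using comp_assoc[OF c z c] right_inverse comp_idt_left[OF c] comp_idt_right[OF c] by simp
  then have "z \<cdot> c = idt C A" using mono[OF comp_hom[OF c z] idt_hom[OF A]] by blast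
  from isoI[OF c z this right_inverse] show ?thesis .
qed

lemma Delta_Map_proj:
  assumes M: "is_Map C Y (Delta n) M \<pi>" and \<theta>: "dmap m n \<theta>"
  shows "smor Y m n \<theta> \<cdot> \<pi> n (did n) = \<pi> m \<theta>"
  using smap_cone_compat[OF is_Map_cone[OF M], of n "did n" m \<theta>] dmap_did \<theta>
  by (simp add: Delta_def dcomp_did_left)

lemma Delta_Map_eqI:
  assumes Y: "simplicial_object C Y" and M: "is_Map C Y (Delta n) M \<pi>"
    and u: "u \<in> hom C U M" "u' \<in> hom C U M" and top: "\<pi> n (did n) \<cdot> u = \<pi> n (did n) \<cdot> u'"
  shows "u = u'"
proof (rule is_Map_eqI[OF Y M u])
  fix m \<theta> assume "Delta n m \<theta>"
  then have \<theta>: "dmap m n \<theta>" unfolding Delta_def .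
  have \<pi>: "\<pi> n (did n) \<in> hom C M (sob Y n)" using is_Map_proj_hom[OF M] dmap_did by (simp add: Delta_def)
  show "\<pi> m \<theta> \<cdot> u = \<pi> m \<theta> \<cdot> u'"
    using Delta_Map_proj[OF M \<theta>] comp_assoc[OF u(1) \<pi> simplicial_object_smor_hom[OF Y \<theta>]]
      comp_assoc[OF u(2) \<pi> simplicial_object_smor_hom[OF Y \<theta>]] top by metis
qed

end

text \<open>The data over which \<open>canon_relMap_prop\<close> quantifies: \<open>MX = Map(S, X)\<close>,
  \<open>MY = Map(S, Y)\<close>, \<open>MT = Map(\<Delta>\<^sup>n, Y)\<close> (a copy of \<open>Y\<^sub>n\<close>), their pullback \<open>Pb = Map(S \<hookrightarrow> \<Delta>\<^sup>n, f)\<close>,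
  and the canonical map \<open>c : X\<^sub>n \<rightarrow> Pb\<close>.\<close>

locale rel_Map_square = category C
  for C :: "('o, 'm) cat" and X Y :: "('o, 'm) sobj" and f :: "nat \<Rightarrow> 'm"
    and S :: "nat \<Rightarrow> (nat \<Rightarrow> nat) \<Rightarrow> bool" and n :: nat
    and MX \<pi>X MY \<pi>Y MT \<pi>T r s Pb p1 p2 cX cT c +
  assumes f: "simplicial_map C X Y f" and S: "simplicial_subset n S"
    and MX: "is_Map C X S MX \<pi>X" and MY: "is_Map C Y S MY \<pi>Y" and MT: "is_Map C Y (Delta n) MT \<pi>T"
    and r: "r \<in> hom C MX MY" and r_proj: "\<And>m \<theta>. S m \<theta> \<Longrightarrow> \<pi>Y m \<theta> \<cdot> r = f m \<cdot> \<pi>X m \<theta>"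
    and s: "s \<in> hom C MT MY" and s_proj: "\<And>m \<theta>. S m \<theta> \<Longrightarrow> \<pi>Y m \<theta> \<cdot> s = \<pi>T m \<theta>"
    and pb: "is_pullback C r s Pb p1 p2"
    and cX: "cX \<in> hom C (sob X n) MX" and cX_proj: "\<And>m \<theta>. S m \<theta> \<Longrightarrow> \<pi>X m \<theta> \<cdot> cX = smor X m n \<theta>"
    and cT: "cT \<in> hom C (sob X n) MT"
    and cT_proj: "\<And>m \<theta>. Delta n m \<theta> \<Longrightarrow> \<pi>T m \<theta> \<cdot> cT = f m \<cdot> smor X m n \<theta>"
    and c: "c \<in> hom C (sob X n) Pb" and c_p1: "p1 \<cdot> c = cX" and c_p2: "p2 \<cdot> c = cT"

lemma canon_relMap_propI:
  assumes "\<And>MX \<pi>X MY \<pi>Y MT \<pi>T r s Pb p1 p2 cX cT c.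
    rel_Map_square C X Y f S n MX \<pi>X MY \<pi>Y MT \<pi>T r s Pb p1 p2 cX cT c \<Longrightarrow> P c"
    and "is_cat C" "simplicial_map C X Y f" "simplicial_subset n S"
  shows "canon_relMap_prop C X Y f S n P"
  unfolding canon_relMap_prop_def
proof (intro allI impI, elim conjE)
  fix MX \<pi>X MY \<pi>Y MT \<pi>T r s Pb p1 p2 cX cT c
  assume "is_Map C X S MX \<pi>X" "is_Map C Y S MY \<pi>Y" "is_Map C Y (Delta n) MT \<pi>T" "r \<in> hom C MX MY"
    "\<forall>m \<theta>. S m \<theta> \<longrightarrow> cmp C (\<pi>Y m \<theta>) r = cmp C (f m) (\<pi>X m \<theta>)" "s \<in> hom C MT MY"
    "\<forall>m \<theta>. S m \<theta> \<longrightarrow> cmp C (\<pi>Y m \<theta>) s = \<pi>T m \<theta>" "is_pullback C r s Pb p1 p2"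
    "cX \<in> hom C (sob X n) MX" "\<forall>m \<theta>. S m \<theta> \<longrightarrow> cmp C (\<pi>X m \<theta>) cX = smor X m n \<theta>"
    "cT \<in> hom C (sob X n) MT" "\<forall>m \<theta>. Delta n m \<theta> \<longrightarrow> cmp C (\<pi>T m \<theta>) cT = cmp C (f m) (smor X m n \<theta>)"
    "c \<in> hom C (sob X n) Pb" "cmp C p1 c = cX" "cmp C p2 c = cT"
  with assms(2-4) have "rel_Map_square C X Y f S n MX \<pi>X MY \<pi>Y MT \<pi>T r s Pb p1 p2 cX cT c"
    unfolding rel_Map_square_def rel_Map_square_axioms_def category_def by blast
  then show "P c" by (rule assms(1))
qed

lemma (in rel_Map_square) canon_relMap_propD: "canon_relMap_prop C X Y f S n P \<Longrightarrow> P c"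
  unfolding canon_relMap_prop_def
  by (erule allE[of _ MX], erule allE[of _ \<pi>X], erule allE[of _ MY], erule allE[of _ \<pi>Y],
      erule allE[of _ MT], erule allE[of _ \<pi>T], erule allE[of _ r], erule allE[of _ s],
      erule allE[of _ Pb], erule allE[of _ p1], erule allE[of _ p2], erule allE[of _ cX],
      erule allE[of _ cT], erule allE[of _ c], erule mp)
     (simp add: MX MY MT r r_proj s s_proj pb cX cX_proj cT cT_proj c c_p1 c_p2)

context rel_Map_square
begin

lemma X: "simplicial_object C X" and Y: "simplicial_object C Y"
  using f unfolding simplicial_map_def by blast+

lemma p: "p1 \<in> hom C Pb MX" "p2 \<in> hom C Pb MT" "r \<cdot> p1 = s \<cdot> p2"
  using pullback_square[OF pb r s] .

lemma \<pi>X: "S m \<theta> \<Longrightarrow> \<pi>X m \<theta> \<in> hom C MX (sob X m)"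
  using is_Map_proj_hom[OF MX] .

lemma \<pi>Y: "S m \<theta> \<Longrightarrow> \<pi>Y m \<theta> \<in> hom C MY (sob Y m)"
  using is_Map_proj_hom[OF MY] .

lemma \<pi>T: "dmap m n \<theta> \<Longrightarrow> \<pi>T m \<theta> \<in> hom C MT (sob Y m)"
  using is_Map_proj_hom[OF MT] unfolding Delta_def .

lemma relMap_eqI:
  assumes g: "g1 \<in> hom C U Pb" "g2 \<in> hom C U Pb"
    and bdry: "\<And>m \<theta>. S m \<theta> \<Longrightarrow> \<pi>X m \<theta> \<cdot> (p1 \<cdot> g1) = \<pi>X m \<theta> \<cdot> (p1 \<cdot> g2)"
    and top: "\<pi>T n (did n) \<cdot> (p2 \<cdot> g1) = \<pi>T n (did n) \<cdot> (p2 \<cdot> g2)"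
  shows "g1 = g2"
proof -
  have "p1 \<cdot> g1 = p1 \<cdot> g2" using is_Map_eqI[OF X MX comp_hom[OF g(1) p(1)] comp_hom[OF g(2) p(1)] bdry] .
  moreover have "p2 \<cdot> g1 = p2 \<cdot> g2" using Delta_Map_eqI[OF Y MT comp_hom[OF g(1) p(2)] comp_hom[OF g(2) p(2)] top] .
  moreover have "\<exists>!u. u \<in> hom C U Pb \<and> p1 \<cdot> u = p1 \<cdot> g2 \<and> p2 \<cdot> u = p2 \<cdot> g2"
    using pullback_universal[OF pb r s comp_hom[OF g(2) p(1)] comp_hom[OF g(2) p(2)]]
      comp_assoc[OF g(2) p(1) r] comp_assoc[OF g(2) p(2) s] p(3) by simp
  ultimately show ?thesis using g by (elim ex1_equality) simp_all
qed

lemma relMap_lift: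
  assumes b: "smap_cone C X S U b" and y: "y \<in> hom C U (sob Y n)"
    and compat: "\<And>m \<theta>. S m \<theta> \<Longrightarrow> f m \<cdot> b m \<theta> = smor Y m n \<theta> \<cdot> y"
  obtains g where "g \<in> hom C U Pb" "\<And>m \<theta>. S m \<theta> \<Longrightarrow> \<pi>X m \<theta> \<cdot> (p1 \<cdot> g) = b m \<theta>"
proof -
  obtain u1 where u1: "u1 \<in> hom C U MX" "\<And>m \<theta>. S m \<theta> \<Longrightarrow> \<pi>X m \<theta> \<cdot> u1 = b m \<theta>"
    by (rule is_Map_lift[OF MX b]) blast
  obtain u2 where u2: "u2 \<in> hom C U MT" "\<And>m \<theta>. Delta n m \<theta> \<Longrightarrow> \<pi>T m \<theta> \<cdot> u2 = smor Y m n \<theta> \<cdot> y"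
    by (rule is_Map_lift[OF MT smor_point_cone[OF Y simplicial_subset_Delta y]]) blast
  have "r \<cdot> u1 = s \<cdot> u2"
  proof (rule is_Map_eqI[OF Y MY comp_hom[OF u1(1) r] comp_hom[OF u2(1) s]])
    fix m \<theta> assume \<theta>: "S m \<theta>"
    have "\<pi>Y m \<theta> \<cdot> (r \<cdot> u1) = f m \<cdot> b m \<theta>"
      using comp_assoc[OF u1(1) r \<pi>Y[OF \<theta>]] comp_assoc[OF u1(1) \<pi>X[OF \<theta>] simplicial_map_hom[OF f]]
        r_proj[OF \<theta>] u1(2)[OF \<theta>] by simp
    moreover have "\<pi>Y m \<theta> \<cdot> (s \<cdot> u2) = smor Y m n \<theta> \<cdot> y"
      using comp_assoc[OF u2(1) s \<pi>Y[OF \<theta>]] s_proj[OF \<theta>] u2(2) simplicial_subset_dmap[OF S, OF \<theta>]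
      unfolding Delta_def by simp
    ultimately show "\<pi>Y m \<theta> \<cdot> (r \<cdot> u1) = \<pi>Y m \<theta> \<cdot> (s \<cdot> u2)" using compat[OF \<theta>] by simp
  qed
  then obtain g where "g \<in> hom C U Pb" "p1 \<cdot> g = u1"
    using pullback_universal[OF pb r s u1(1) u2(1)] by blast
  with u1(2) show ?thesis by (intro that) auto
qed

lemma canonical_proj:
  assumes z: "z \<in> hom C U (sob X n)"
  shows "S m \<theta> \<Longrightarrow> \<pi>X m \<theta> \<cdot> (p1 \<cdot> (c \<cdot> z)) = smor X m n \<theta> \<cdot> z"
    and "\<pi>T n (did n) \<cdot> (p2 \<cdot> (c \<cdot> z)) = f n \<cdot> z"
proof -
  show "\<pi>X m \<theta> \<cdot> (p1 \<cdot> (c \<cdot> z)) = smor X m n \<theta> \<cdot> z" if \<theta>: "S m \<theta>"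
    using comp_assoc[OF z c p(1)] comp_assoc[OF z cX \<pi>X[OF \<theta>]] c_p1 cX_proj[OF \<theta>] by simp
  have "\<pi>T n (did n) \<cdot> cT = f n"
    using cT_proj[of n "did n"] dmap_did simplicial_object_smor_did[OF X] comp_idt_right[OF simplicial_map_hom[OF f]]
    unfolding Delta_def by simp
  then show "\<pi>T n (did n) \<cdot> (p2 \<cdot> (c \<cdot> z)) = f n \<cdot> z"
    using comp_assoc[OF z c p(2)] comp_assoc[OF z cT \<pi>T[OF dmap_did]] c_p2 by simp
qed

lemma canonical_cancel:
  assumes z: "z \<in> hom C U (sob X n)" "z' \<in> hom C U (sob X n)" and eq: "c \<cdot> z = c \<cdot> z'"
  shows "S m \<theta> \<Longrightarrow> smor X m n \<theta> \<cdot> z = smor X m n \<theta> \<cdot> z'" and "f n \<cdot> z = f n \<cdot> z'"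
  using canonical_proj[OF z(1)] canonical_proj[OF z(2)] eq by metis+

lemma canonical_right_inverse:
  assumes z: "z \<in> hom C Pb (sob X n)"
    and bdry: "\<And>m \<theta>. S m \<theta> \<Longrightarrow> smor X m n \<theta> \<cdot> z = \<pi>X m \<theta> \<cdot> p1"
    and top: "f n \<cdot> z = \<pi>T n (did n) \<cdot> p2"
  shows "c \<cdot> z = idt C Pb"
proof (rule relMap_eqI[OF comp_hom[OF z c] idt_hom])
  show "Pb \<in> Ob C" using hom_objs[OF c] by blast
  show "\<pi>X m \<theta> \<cdot> (p1 \<cdot> (c \<cdot> z)) = \<pi>X m \<theta> \<cdot> (p1 \<cdot> idt C Pb)" if "S m \<theta>" for m \<theta>
    using canonical_proj(1)[OF z that] bdry[OF that] comp_idt_right[OF p(1)] by simp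
  show "\<pi>T n (did n) \<cdot> (p2 \<cdot> (c \<cdot> z)) = \<pi>T n (did n) \<cdot> (p2 \<cdot> idt C Pb)"
    using canonical_proj(2)[OF z] top comp_idt_right[OF p(2)] by simp
qed

lemma relMap_boundary_cone: "smap_cone C X S Pb (\<lambda>m \<theta>. \<pi>X m \<theta> \<cdot> p1)"
  using smap_cone_comp[OF X is_Map_cone[OF MX] p(1)] .

lemma relMap_top_hom: "\<pi>T n (did n) \<cdot> p2 \<in> hom C Pb (sob Y n)"
  using comp_hom[OF p(2) \<pi>T[OF dmap_did]] .

lemma relMap_boundary_compat:
  assumes \<theta>: "S m \<theta>"
  shows "f m \<cdot> (\<pi>X m \<theta> \<cdot> p1) = smor Y m n \<theta> \<cdot> (\<pi>T n (did n) \<cdot> p2)"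
proof -
  have d: "dmap m n \<theta>" using simplicial_subset_dmap[OF S, OF \<theta>] .
  have "f m \<cdot> (\<pi>X m \<theta> \<cdot> p1) = \<pi>Y m \<theta> \<cdot> (r \<cdot> p1)"
    using comp_assoc[OF p(1) \<pi>X[OF \<theta>] simplicial_map_hom[OF f]] comp_assoc[OF p(1) r \<pi>Y[OF \<theta>]] r_proj[OF \<theta>]
    by simp
  also have "\<dots> = \<pi>T m \<theta> \<cdot> p2"
    using p(3) comp_assoc[OF p(2) s \<pi>Y[OF \<theta>]] s_proj[OF \<theta>] by simp
  also have "\<dots> = smor Y m n \<theta> \<cdot> (\<pi>T n (did n) \<cdot> p2)"
    using comp_assoc[OF p(2) \<pi>T[OF dmap_did] simplicial_object_smor_hom[OF Y d]] Delta_Map_proj[OF MT d] by simp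
  finally show ?thesis .
qed

end

lemma (in finitely_complete_category) rel_Map_square_exists:
  assumes f: "simplicial_map C X Y f" and S: "simplicial_subset n S"
  obtains MX \<pi>X MY \<pi>Y MT \<pi>T r s Pb p1 p2 cX cT c
  where "rel_Map_square C X Y f S n MX \<pi>X MY \<pi>Y MT \<pi>T r s Pb p1 p2 cX cT c"
proof -
  have X: "simplicial_object C X" and Y: "simplicial_object C Y" using f unfolding simplicial_map_def by blast+
  obtain MX \<pi>X where MX: "is_Map C X S MX \<pi>X" using Map_exists[OF X S] .
  obtain MY \<pi>Y where MY: "is_Map C Y S MY \<pi>Y" using Map_exists[OF Y S] .
  obtain MT \<pi>T where MT: "is_Map C Y (Delta n) MT \<pi>T" using Map_exists[OF Y simplicial_subset_Delta] .
  obtain r where r: "r \<in> hom C MX MY" "\<And>m \<theta>. S m \<theta> \<Longrightarrow> \<pi>Y m \<theta> \<cdot> r = f m \<cdot> \<pi>X m \<theta>"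
    by (rule is_Map_lift[OF MY smap_cone_map[OF f is_Map_cone[OF MX]]]) blast
  have "smap_cone C Y S MT \<pi>T"
    using smap_cone_restrict[OF is_Map_cone[OF MT]] simplicial_subset_dmap[OF S] unfolding Delta_def by blast
  then obtain s where s: "s \<in> hom C MT MY" "\<And>m \<theta>. S m \<theta> \<Longrightarrow> \<pi>Y m \<theta> \<cdot> s = \<pi>T m \<theta>"
    by (rule is_Map_lift[OF MY]) blast
  obtain Pb p1 p2 where pb: "is_pullback C r s Pb p1 p2" using pullback_exists[OF r(1) s(1)] .
  obtain cX where cX: "cX \<in> hom C (sob X n) MX" "\<And>m \<theta>. S m \<theta> \<Longrightarrow> \<pi>X m \<theta> \<cdot> cX = smor X m n \<theta>"
    by (rule is_Map_canonical[OF X S MX]) blast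
  obtain cT where cT: "cT \<in> hom C (sob X n) MT"
    "\<And>m \<theta>. Delta n m \<theta> \<Longrightarrow> \<pi>T m \<theta> \<cdot> cT = f m \<cdot> smor X m n \<theta>"
    by (rule is_Map_lift[OF MT smap_cone_map[OF f smor_cone[OF X simplicial_subset_Delta]]]) blast
  have "r \<cdot> cX = s \<cdot> cT"
  proof (rule is_Map_eqI[OF Y MY comp_hom[OF cX(1) r(1)] comp_hom[OF cT(1) s(1)]])
    fix m \<theta> assume \<theta>: "S m \<theta>"
    have \<pi>X: "\<pi>X m \<theta> \<in> hom C MX (sob X m)" and \<pi>Y: "\<pi>Y m \<theta> \<in> hom C MY (sob Y m)"
      using is_Map_proj_hom[OF MX, OF \<theta>] is_Map_proj_hom[OF MY, OF \<theta>] .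
    have "\<pi>Y m \<theta> \<cdot> (r \<cdot> cX) = f m \<cdot> smor X m n \<theta>"
      using comp_assoc[OF cX(1) r(1) \<pi>Y] comp_assoc[OF cX(1) \<pi>X simplicial_map_hom[OF f]] r(2)[OF \<theta>] cX(2)[OF \<theta>]
      by simp
    moreover have "\<pi>Y m \<theta> \<cdot> (s \<cdot> cT) = f m \<cdot> smor X m n \<theta>"
      using comp_assoc[OF cT(1) s(1) \<pi>Y] s(2)[OF \<theta>] cT(2) simplicial_subset_dmap[OF S, OF \<theta>]
      unfolding Delta_def by simp
    ultimately show "\<pi>Y m \<theta> \<cdot> (r \<cdot> cX) = \<pi>Y m \<theta> \<cdot> (s \<cdot> cT)" by simp
  qed
  then obtain c where c: "c \<in> hom C (sob X n) Pb" "p1 \<cdot> c = cX" "p2 \<cdot> c = cT"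
    using pullback_universal[OF pb r(1) s(1) cX(1) cT(1)] by blast
  have "rel_Map_square C X Y f S n MX \<pi>X MY \<pi>Y MT \<pi>T r s Pb p1 p2 cX cT c"
    by unfold_locales (use f S MX MY MT r s pb cX cT c in auto)
  then show ?thesis by (rule that)
qed

section \<open>Hypercovers of \<open>k\<close>-groupoids\<close>

context category
begin

lemma smor_dsigma_top_point:
  assumes X: "simplicial_object C X" and \<psi>: "dmap m (Suc p) \<psi>" "Suc p \<notin> \<psi> ` {0..m}"
    and z: "z \<in> hom C U (sob X p)"
  shows "smor X m (Suc p) \<psi> \<cdot> (smor X (Suc p) p (dsigma_top p) \<cdot> z) = smor X m p \<psi> \<cdot> z"
  using smor_comp_point[OF X \<psi>(1) dmap_dsigma_top z] dmap_avoiding_top(2)[OF \<psi>] by simp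

text \<open>A boundary cone of \<open>\<Delta>\<^sup>p\<^sup>+\<^sup>1\<close> built from \<open>w\<close> on the faces \<open>\<partial>\<^sub>j\<close>, \<open>j \<le> p\<close>, and from \<open>w'\<close> on the
  last face \<open>\<partial>\<^sub>p\<^sub>+\<^sub>1\<close>; the two must agree where these faces meet.\<close>

lemma glued_boundary_cone:
  assumes X: "simplicial_object C X" and w: "w \<in> hom C U (sob X (Suc p))" "w' \<in> hom C U (sob X (Suc p))"
    and agree: "\<And>m \<psi>. dmap m (Suc p) \<psi> \<Longrightarrow> Suc p \<notin> \<psi> ` {0..m} \<Longrightarrow> \<exists>j\<le>p. j \<notin> \<psi> ` {0..m} \<Longrightarrow>
      smor X m (Suc p) \<psi> \<cdot> w = smor X m (Suc p) \<psi> \<cdot> w'"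
  shows "smap_cone C X (bdry (Suc p)) U
    (\<lambda>m \<theta>. smor X m (Suc p) \<theta> \<cdot> (if \<exists>j\<le>p. j \<notin> \<theta> ` {0..m} then w else w'))"
    (is "smap_cone C X _ U (\<lambda>m \<theta>. smor X m _ \<theta> \<cdot> ?W m \<theta>)")
proof (rule smap_coneI)
  have W: "?W m \<theta> \<in> hom C U (sob X (Suc p))" for m \<theta> using w by simp
  show "U \<in> Ob C" using hom_objs[OF w(1)] by blast
  show "smor X m (Suc p) \<theta> \<cdot> ?W m \<theta> \<in> hom C U (sob X m)" if "bdry (Suc p) m \<theta>" for m \<theta>
    using smor_point_hom[OF X W] that unfolding bdry_def by blast
  fix m k \<theta> \<phi> assume \<theta>: "bdry (Suc p) k \<theta>" and \<phi>: "dmap m k \<phi>"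
  have d: "dmap k (Suc p) \<theta>" using \<theta> unfolding bdry_def by blast
  have sub: "dcomp m \<theta> \<phi> ` {0..m} \<subseteq> \<theta> ` {0..k}" using image_dcomp_subset[OF \<phi>] .
  have "smor X m (Suc p) (dcomp m \<theta> \<phi>) \<cdot> ?W k \<theta> = smor X m (Suc p) (dcomp m \<theta> \<phi>) \<cdot> ?W m (dcomp m \<theta> \<phi>)"
  proof (cases "\<exists>j\<le>p. j \<notin> \<theta> ` {0..k}")
    case True
    moreover from True have "\<exists>j\<le>p. j \<notin> dcomp m \<theta> \<phi> ` {0..m}" using sub by blast
    ultimately show ?thesis by simp
  next
    case False
    then have "Suc p \<notin> \<theta> ` {0..k}" using \<theta> unfolding bdry_def by (metis le_Suc_eq)
    then have "Suc p \<notin> dcomp m \<theta> \<phi> ` {0..m}" using sub by blast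
    then show ?thesis using False agree[OF dmap_dcomp[OF \<phi> d]] by auto
  qed
  then show "smor X m k \<phi> \<cdot> (smor X k (Suc p) \<theta> \<cdot> ?W k \<theta>) = smor X m (Suc p) (dcomp m \<theta> \<phi>) \<cdot> ?W m (dcomp m \<theta> \<phi>)"
    using smor_comp_point[OF X \<phi> d W] by simp
qed

lemma degenerate_glued_cone:
  assumes X: "simplicial_object C X" and z: "z \<in> hom C U (sob X k)" "z' \<in> hom C U (sob X k)"
    and bdry: "\<And>m \<theta>. bdry k m \<theta> \<Longrightarrow> smor X m k \<theta> \<cdot> z = smor X m k \<theta> \<cdot> z'"
  obtains b where "smap_cone C X (bdry (Suc k)) U b"
    "\<And>m \<theta>. b m \<theta> = smor X m (Suc k) \<theta> \<cdot> (smor X (Suc k) k (dsigma_top k) \<cdot> z) \<or>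
       b m \<theta> = smor X m (Suc k) \<theta> \<cdot> (smor X (Suc k) k (dsigma_top k) \<cdot> z')"
    "\<And>m \<theta>. horn (Suc k) (Suc k) m \<theta> \<Longrightarrow> b m \<theta> = smor X m (Suc k) \<theta> \<cdot> (smor X (Suc k) k (dsigma_top k) \<cdot> z)"
    "b k (did k) = z'"
proof -
  define \<sigma> where "\<sigma> = smor X (Suc k) k (dsigma_top k)"
  have \<sigma>z: "\<sigma> \<cdot> z \<in> hom C U (sob X (Suc k))" "\<sigma> \<cdot> z' \<in> hom C U (sob X (Suc k))"
    unfolding \<sigma>_def using smor_point_hom[OF X z(1)] smor_point_hom[OF X z(2)] dmap_dsigma_top by blast+
  have \<sigma>_face: "smor X m (Suc k) \<psi> \<cdot> (\<sigma> \<cdot> z) = smor X m k \<psi> \<cdot> z" "smor X m (Suc k) \<psi> \<cdot> (\<sigma> \<cdot> z') = smor X m k \<psi> \<cdot> z'"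
    if "dmap m (Suc k) \<psi>" "Suc k \<notin> \<psi> ` {0..m}" for m \<psi>
    unfolding \<sigma>_def using smor_dsigma_top_point[OF X that z(1)] smor_dsigma_top_point[OF X that z(2)] by auto
  define b where "b m \<theta> = smor X m (Suc k) \<theta> \<cdot> (if \<exists>j\<le>k. j \<notin> \<theta> ` {0..m} then \<sigma> \<cdot> z else \<sigma> \<cdot> z')"
    for m \<theta>
  have "smap_cone C X (bdry (Suc k)) U b"
    unfolding b_def
  proof (rule glued_boundary_cone[OF X \<sigma>z])
    fix m \<psi> assume \<psi>: "dmap m (Suc k) \<psi>" "Suc k \<notin> \<psi> ` {0..m}" "\<exists>j\<le>k. j \<notin> \<psi> ` {0..m}"
    then have "bdry k m \<psi>" using dmap_avoiding_top(1)[OF \<psi>(1,2)] unfolding bdry_def by blast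
    then show "smor X m (Suc k) \<psi> \<cdot> (\<sigma> \<cdot> z) = smor X m (Suc k) \<psi> \<cdot> (\<sigma> \<cdot> z')"
      using \<sigma>_face[OF \<psi>(1,2)] bdry by simp
  qed
  moreover have "b m \<theta> = smor X m (Suc k) \<theta> \<cdot> (\<sigma> \<cdot> z)" if "horn (Suc k) (Suc k) m \<theta>" for m \<theta>
  proof -
    have "\<exists>j\<le>k. j \<notin> \<theta> ` {0..m}" using that unfolding horn_def by (metis le_Suc_eq)
    then show ?thesis unfolding b_def by simp
  qed
  moreover have "b k (did k) = z'"
  proof -
    have "\<not> (\<exists>j\<le>k. j \<notin> did k ` {0..k})" unfolding did_def by force
    moreover have "Suc k \<notin> did k ` {0..k}" unfolding did_def by auto
    ultimately show ?thesis
      unfolding b_def using \<sigma>_face(2)[OF dmap_did_Suc] smor_did_point[OF X z(2)] by auto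
  qed
  ultimately show ?thesis using that unfolding \<sigma>_def b_def by auto
qed

end

locale hypercover_of_k_groupoids = subcanonical_descent_category C Cov
  for C :: "('o, 'm) cat" and Cov :: "'m set" +
  fixes k :: nat and X Y :: "('o, 'm) sobj" and f :: "nat \<Rightarrow> 'm"
  assumes X_groupoid: "k_groupoid C Cov k X" and Y_groupoid: "k_groupoid C Cov k Y"
    and hypercover: "hypercover C Cov X Y f"
begin

lemma f: "simplicial_map C X Y f"
  using hypercover unfolding hypercover_def by blast

lemma X: "simplicial_object C X" and Y: "simplicial_object C Y"
  using f unfolding simplicial_map_def by blast+

lemma hypercover_cover:
  assumes "rel_Map_square C X Y f (bdry n) n MX \<pi>X MY \<pi>Y MT \<pi>T r s Pb p1 p2 cX cT c"
  shows "c \<in> Cov"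
proof -
  have "canon_relMap_prop C X Y f (bdry n) n (\<lambda>c. c \<in> Cov)"
    using hypercover unfolding hypercover_def by blast
  with rel_Map_square.canon_relMap_propD[OF assms] show ?thesis by blast
qed

lemma hypercover_local_lift:
  assumes b: "smap_cone C X (bdry n) U b" and y: "y \<in> hom C U (sob Y n)"
    and compat: "\<And>m \<theta>. bdry n m \<theta> \<Longrightarrow> f m \<cdot> b m \<theta> = smor Y m n \<theta> \<cdot> y"
  obtains Q e v where "e \<in> hom C Q U" "e \<in> Cov" "v \<in> hom C Q (sob X n)"
    "\<And>m \<theta>. bdry n m \<theta> \<Longrightarrow> smor X m n \<theta> \<cdot> v = b m \<theta> \<cdot> e"
proof -
  obtain MX \<pi>X MY \<pi>Y MT \<pi>T r s Pb p1 p2 cX cT c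
    where sq: "rel_Map_square C X Y f (bdry n) n MX \<pi>X MY \<pi>Y MT \<pi>T r s Pb p1 p2 cX cT c"
    by (rule rel_Map_square_exists[OF f simplicial_subset_bdry])
  interpret sq: rel_Map_square C X Y f "bdry n" n MX \<pi>X MY \<pi>Y MT \<pi>T r s Pb p1 p2 cX cT c by (rule sq)
  obtain g where g: "g \<in> hom C U Pb" "\<And>m \<theta>. bdry n m \<theta> \<Longrightarrow> \<pi>X m \<theta> \<cdot> (p1 \<cdot> g) = b m \<theta>"
    using sq.relMap_lift[OF b y compat] by blast
  obtain Q v e where pb: "is_pullback C c g Q v e" using pullback_exists[OF sq.c g(1)] .
  have ve: "v \<in> hom C Q (sob X n)" "e \<in> hom C Q U" "c \<cdot> v = g \<cdot> e"
    using pullback_square[OF pb sq.c g(1)] .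
  have "smor X m n \<theta> \<cdot> v = b m \<theta> \<cdot> e" if \<theta>: "bdry n m \<theta>" for m \<theta>
  proof -
    have "smor X m n \<theta> \<cdot> v = \<pi>X m \<theta> \<cdot> (p1 \<cdot> (g \<cdot> e))" using sq.canonical_proj(1)[OF ve(1) \<theta>] ve(3) by simp
    also have "\<dots> = b m \<theta> \<cdot> e"
      using comp_assoc[OF ve(2) g(1) sq.p(1)] comp_assoc[OF ve(2) comp_hom[OF g(1) sq.p(1)] sq.\<pi>X[OF \<theta>]] g(2)[OF \<theta>]
      by simp
    finally show ?thesis .
  qed
  with ve cover_pullback[OF hypercover_cover[OF sq] pb] show ?thesis by (intro that)
qed

lemma boundary_determines_above:
  assumes "k < n" and z: "z \<in> hom C U (sob X n)" "z' \<in> hom C U (sob X n)"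
    and bdry: "\<And>m \<theta>. bdry n m \<theta> \<Longrightarrow> smor X m n \<theta> \<cdot> z = smor X m n \<theta> \<cdot> z'"
  shows "z = z'"
  by (rule k_groupoid_horn_unique[OF X_groupoid \<open>k < n\<close> le0 z]) (rule bdry[OF horn_imp_bdry])

text \<open>At level \<open>k\<close> the horn condition is no longer available. Instead, degenerate \<open>z\<close> and \<open>z'\<close> to
  level \<open>k + 1\<close>, glue the results to a boundary datum that sees \<open>z\<close> on the horn \<open>\<Lambda>\<^sup>k\<^sup>+\<^sup>1\<^sub>k\<^sub>+\<^sub>1\<close> and
  \<open>z'\<close> on the last face, and lift it along a cover: the lift agrees with the degeneracy of \<open>z\<close>
  on the horn, hence everywhere, so its last face is both \<open>z\<close> and \<open>z'\<close>.\<close>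

lemma boundary_determines_at:
  assumes z: "z \<in> hom C U (sob X k)" "z' \<in> hom C U (sob X k)"
    and bdry: "\<And>m \<theta>. bdry k m \<theta> \<Longrightarrow> smor X m k \<theta> \<cdot> z = smor X m k \<theta> \<cdot> z'"
    and top: "f k \<cdot> z = f k \<cdot> z'"
  shows "z = z'"
proof -
  define w where "w = smor X (Suc k) k (dsigma_top k) \<cdot> z"
  have w: "w \<in> hom C U (sob X (Suc k))" unfolding w_def using smor_point_hom[OF X z(1) dmap_dsigma_top] .
  obtain b where b: "smap_cone C X (bdry (Suc k)) U b"
    and b_cases: "\<And>m \<theta>. b m \<theta> = smor X m (Suc k) \<theta> \<cdot> w \<or>
       b m \<theta> = smor X m (Suc k) \<theta> \<cdot> (smor X (Suc k) k (dsigma_top k) \<cdot> z')"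
    and b_horn: "\<And>m \<theta>. horn (Suc k) (Suc k) m \<theta> \<Longrightarrow> b m \<theta> = smor X m (Suc k) \<theta> \<cdot> w"
    and b_last: "b k (did k) = z'"
    unfolding w_def by (rule degenerate_glued_cone[OF X z bdry]) auto
  have "f (Suc k) \<cdot> w = f (Suc k) \<cdot> (smor X (Suc k) k (dsigma_top k) \<cdot> z')"
    unfolding w_def using simplicial_map_natural_point[OF f z(1) dmap_dsigma_top]
      simplicial_map_natural_point[OF f z(2) dmap_dsigma_top] top by simp
  then have compat: "f m \<cdot> b m \<theta> = smor Y m (Suc k) \<theta> \<cdot> (f (Suc k) \<cdot> w)" if "bdry (Suc k) m \<theta>" for m \<theta>
    using b_cases[of m \<theta>] that simplicial_map_natural_point[OF f w]
      simplicial_map_natural_point[OF f smor_point_hom[OF X z(2) dmap_dsigma_top]]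
    unfolding bdry_def by auto
  obtain Q e v where e: "e \<in> hom C Q U" "e \<in> Cov" and v: "v \<in> hom C Q (sob X (Suc k))"
    and v_bdry: "\<And>m \<theta>. bdry (Suc k) m \<theta> \<Longrightarrow> smor X m (Suc k) \<theta> \<cdot> v = b m \<theta> \<cdot> e"
    by (rule hypercover_local_lift[OF b comp_hom[OF w simplicial_map_hom[OF f]] compat]) auto
  have "v = w \<cdot> e"
  proof (rule k_groupoid_horn_unique[OF X_groupoid _ order_refl v comp_hom[OF e(1) w]])
    fix m \<theta> assume h: "horn (Suc k) (Suc k) m \<theta>"
    then show "smor X m (Suc k) \<theta> \<cdot> v = smor X m (Suc k) \<theta> \<cdot> (w \<cdot> e)"
      using v_bdry[OF horn_imp_bdry[OF h]] b_horn[OF h] comp_assoc[OF e(1) w simplicial_object_smor_hom[OF X]]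
      unfolding horn_def by simp
  qed simp
  then have "z' \<cdot> e = z \<cdot> e"
    using v_bdry[OF bdry_did_Suc] b_last smor_dsigma_top_point[OF X dmap_did_Suc _ z(1)] smor_did_point[OF X z(1)]
      comp_assoc[OF e(1) w simplicial_object_smor_hom[OF X dmap_did_Suc]]
    unfolding w_def did_def by auto
  then show ?thesis using cover_cancel_right[OF e(2,1) z] by simp
qed

lemma boundary_determines:
  assumes "k \<le> n" and z: "z \<in> hom C U (sob X n)" "z' \<in> hom C U (sob X n)"
    and bdry: "\<And>m \<theta>. bdry n m \<theta> \<Longrightarrow> smor X m n \<theta> \<cdot> z = smor X m n \<theta> \<cdot> z'"
    and top: "f n \<cdot> z = f n \<cdot> z'"
  shows "z = z'"
proof (cases "n = k")
  case True
  with z bdry top show ?thesis using boundary_determines_at by blast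
next
  case False
  with \<open>k \<le> n\<close> have "k < n" by simp
  from this z bdry show ?thesis by (rule boundary_determines_above)
qed

text \<open>Above level \<open>k\<close>, fill the horn \<open>\<Lambda>\<^sup>n\<^sub>0\<close>; the image of the filler is forced by the horn
  condition on \<open>Y\<close>, and the missing face \<open>\<partial>\<^sub>0\<close> is then forced one level down, where
  \<open>k \<le> n - 1\<close>.\<close>

lemma boundary_filler:
  assumes "k < n" and b: "smap_cone C X (bdry n) U b" and y: "y \<in> hom C U (sob Y n)"
    and compat: "\<And>m \<theta>. bdry n m \<theta> \<Longrightarrow> f m \<cdot> b m \<theta> = smor Y m n \<theta> \<cdot> y"
  obtains z where "z \<in> hom C U (sob X n)" "\<And>m \<theta>. bdry n m \<theta> \<Longrightarrow> smor X m n \<theta> \<cdot> z = b m \<theta>"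
    "f n \<cdot> z = y"
proof -
  obtain p where n: "n = Suc p" and "k \<le> p" using \<open>k < n\<close> by (cases n) auto
  have bh: "smap_cone C X (horn n 0) U b" using smap_cone_restrict[OF b horn_imp_bdry] .
  obtain z where z: "z \<in> hom C U (sob X n)" and z_horn: "\<And>m \<theta>. horn n 0 m \<theta> \<Longrightarrow> smor X m n \<theta> \<cdot> z = b m \<theta>"
    by (rule k_groupoid_horn_fill[OF X_groupoid \<open>k < n\<close> le0 bh]) auto
  have fz: "f n \<cdot> z = y"
  proof (rule k_groupoid_horn_unique[OF Y_groupoid \<open>k < n\<close> le0 comp_hom[OF z simplicial_map_hom[OF f]] y])
    fix m \<theta> assume h: "horn n 0 m \<theta>"
    then have "dmap m n \<theta>" unfolding horn_def by blast
    then show "smor Y m n \<theta> \<cdot> (f n \<cdot> z) = smor Y m n \<theta> \<cdot> y"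
      using simplicial_map_natural_point[OF f z] z_horn[OF h] compat[OF horn_imp_bdry[OF h]] by metis
  qed
  define \<delta> where "\<delta> = ddelta_bot p"
  have \<delta>: "dmap p n \<delta>" "bdry n p \<delta>" unfolding \<delta>_def n using dmap_ddelta_bot bdry_ddelta_bot by blast+
  have face: "smor X p n \<delta> \<cdot> z = b p \<delta>"
  proof (rule boundary_determines[OF \<open>k \<le> p\<close> smor_point_hom[OF X z \<delta>(1)] smap_cone_hom[OF b, OF \<delta>(2)]])
    fix m \<psi> assume \<psi>: "bdry p m \<psi>"
    then have "horn n 0 m (dcomp m \<delta> \<psi>)" unfolding \<delta>_def n by (rule horn_bot_dcomp_ddelta_bot)
    moreover have d\<psi>: "dmap m p \<psi>" using \<psi> unfolding bdry_def by blast
    ultimately show "smor X m p \<psi> \<cdot> (smor X p n \<delta> \<cdot> z) = smor X m p \<psi> \<cdot> b p \<delta>"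
      using smor_comp_point[OF X d\<psi> \<delta>(1) z] z_horn smap_cone_compat[OF b, OF \<delta>(2) d\<psi>] by simp
  next
    show "f p \<cdot> (smor X p n \<delta> \<cdot> z) = f p \<cdot> b p \<delta>"
      using simplicial_map_natural_point[OF f z \<delta>(1)] fz compat[OF \<delta>(2)] by simp
  qed
  have "smor X m n \<theta> \<cdot> z = b m \<theta>" if \<theta>: "bdry n m \<theta>" for m \<theta>
  proof (cases "horn n 0 m \<theta>")
    case False
    then have "0 \<notin> \<theta> ` {0..m}" using bdry_not_horn_bot[OF \<theta>] by blast
    then have \<theta>': "dmap m p (\<lambda>j. \<theta> j - 1)" "dcomp m \<delta> (\<lambda>j. \<theta> j - 1) = \<theta>"
      using dmap_avoiding_bot[of m p \<theta>] \<theta> unfolding \<delta>_def n bdry_def by auto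
    then show ?thesis
      using smor_comp_point[OF X \<theta>'(1) \<delta>(1) z] face smap_cone_compat[OF b, OF \<delta>(2) \<theta>'(1)] by simp
  qed (rule z_horn)
  with z fz show ?thesis by (intro that)
qed

lemma canonical_relMap_iso:
  assumes "k \<le> n" and sq: "rel_Map_square C X Y f (bdry n) n MX \<pi>X MY \<pi>Y MT \<pi>T r s Pb p1 p2 cX cT c"
  shows "iso C c"
proof -
  interpret sq: rel_Map_square C X Y f "bdry n" n MX \<pi>X MY \<pi>Y MT \<pi>T r s Pb p1 p2 cX cT c by (rule sq)
  have mono: "g1 = g2" if g: "g1 \<in> hom C U (sob X n)" "g2 \<in> hom C U (sob X n)" and "c \<cdot> g1 = c \<cdot> g2" for U g1 g2
    using boundary_determines[OF \<open>k \<le> n\<close> g] sq.canonical_cancel[OF g \<open>c \<cdot> g1 = c \<cdot> g2\<close>] by blast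
  show ?thesis
  proof (cases "n = k")
    case True
    show ?thesis using mono by (rule mono_cover_iso[OF hypercover_cover[OF sq] sq.c])
  next
    case False
    with \<open>k \<le> n\<close> have "k < n" by simp
    obtain z where z: "z \<in> hom C Pb (sob X n)" "\<And>m \<theta>. bdry n m \<theta> \<Longrightarrow> smor X m n \<theta> \<cdot> z = \<pi>X m \<theta> \<cdot> p1"
      "f n \<cdot> z = \<pi>T n (did n) \<cdot> p2"
      by (rule boundary_filler[OF \<open>k < n\<close> sq.relMap_boundary_cone sq.relMap_top_hom sq.relMap_boundary_compat]) auto
    have "c \<cdot> z = idt C Pb" by (rule sq.canonical_right_inverse[OF z(1) z(2) z(3)])
    with sq.c z(1) show ?thesis by (rule mono_split_epi_iso) (rule mono)
  qed
qed

end

theorem lemma3p13: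
  fixes C :: "('o,'m) cat" and Cov :: "'m set" and k :: nat
    and X Y :: "('o,'m) sobj" and f :: "nat \<Rightarrow> 'm"
  assumes "descent_category C Cov"
    and "subcanonical C Cov"
    and "k_groupoid C Cov k X"
    and "k_groupoid C Cov k Y"
    and "hypercover C Cov X Y f"
  shows "\<forall>n. k \<le> n \<longrightarrow> canon_relMap_prop C X Y f (bdry n) n (iso C)"
proof (intro allI impI)
  interpret hypercover_of_k_groupoids C Cov k X Y f
    using assms by unfold_locales
  fix n assume "k \<le> n"
  show "canon_relMap_prop C X Y f (bdry n) n (iso C)"
    using canonical_relMap_iso[OF \<open>k \<le> n\<close>] is_cat f simplicial_subset_bdry by (rule canon_relMap_propI)
qed

end
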